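(* The dynamics on $\mathbb{R}^{|S|}\times\mathbb{R}^{|S|\times|A|}_{>0}$ $$\frac{dv_{s'}}{dt}=-\Big(v_{s'}-\frac1\alpha\sum_{s,a}K_{ass'}u_{sa}\Big),\ s'\in S,\qquad \frac{du_{sa}}{dt}=-u_{sa}\Big(\log\frac{u_{sa}}{\tilde u_s}-\frac1\tau\Big(r_{sa}-\sum_{s'}K_{ass'}v_{s'}\Big)\Big),\ (s,a)\in S\times A,$$ converges to $(v^*,u^* )$ at rate $O(e^{-ct})$ for some $c>0$, where $(v^*,u^* )$ is the unique saddle point of $\min_v\max_u E(v,u)$.
   Context: Finite MDP: state space $S$, action space $A$, transition probabilities $P_{ass'}$ (with $\sum_{s'}P_{ass'}=1$), rewards $r_{sa}\ge0$, discount $\gamma\in(0,1)$, regularization $\tau>0$, and $\alpha>0$. $K_{ass'}=\delta_{ss'}-\gamma P_{ass'}$, $\tilde u_s=\sum_a u_{sa}$, and $E(v,u)=\frac{\alpha}{2}\sum_s v_s^2+\sum_{s,a}u_{sa}(r_{sa}-\sum_{s'}K_{ass'}v_{s'})-\tau\sum_{s,a}u_{sa}\log(u_{sa}/\tilde u_s)$. This min-max problem has a unique saddle point $(v^*,u^* )$. *)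

theory Defs
  imports "HOL-Analysis.Analysis"
begin

text \<open>P a s s' is the transition probability P_{ass'}, r s a the reward r_{sa},
  v :: 'S \<Rightarrow> real, u :: 'S \<Rightarrow> 'A \<Rightarrow> real (u s a = u_{sa}).\<close>

definition Kmat :: "real \<Rightarrow> ('A \<Rightarrow> 'S \<Rightarrow> 'S \<Rightarrow> real) \<Rightarrow> 'A \<Rightarrow> 'S \<Rightarrow> 'S \<Rightarrow> real" where
  "Kmat \<gamma> P a s s' = (if s = s' then 1 else 0) - \<gamma> * P a s s'"

definition utilde :: "('S \<Rightarrow> 'A::finite \<Rightarrow> real) \<Rightarrow> 'S \<Rightarrow> real" where
  "utilde u s = (\<Sum>a\<in>UNIV. u s a)"

definition Efun :: "real \<Rightarrow> real \<Rightarrow> real \<Rightarrow> ('A::finite \<Rightarrow> 'S::finite \<Rightarrow> 'S \<Rightarrow> real)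
    \<Rightarrow> ('S \<Rightarrow> 'A \<Rightarrow> real) \<Rightarrow> ('S \<Rightarrow> real) \<Rightarrow> ('S \<Rightarrow> 'A \<Rightarrow> real) \<Rightarrow> real" where
  "Efun \<alpha> \<tau> \<gamma> P r v u =
     \<alpha> / 2 * (\<Sum>s\<in>UNIV. (v s)\<^sup>2)
     + (\<Sum>s\<in>UNIV. \<Sum>a\<in>UNIV. u s a * (r s a - (\<Sum>s'\<in>UNIV. Kmat \<gamma> P a s s' * v s')))
     - \<tau> * (\<Sum>s\<in>UNIV. \<Sum>a\<in>UNIV. u s a * ln (u s a / utilde u s))"

definition is_saddle :: "real \<Rightarrow> real \<Rightarrow> real \<Rightarrow> ('A::finite \<Rightarrow> 'S::finite \<Rightarrow> 'S \<Rightarrow> real)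
    \<Rightarrow> ('S \<Rightarrow> 'A \<Rightarrow> real) \<Rightarrow> ('S \<Rightarrow> real) \<Rightarrow> ('S \<Rightarrow> 'A \<Rightarrow> real) \<Rightarrow> bool" where
  "is_saddle \<alpha> \<tau> \<gamma> P r vs us \<longleftrightarrow>
     (\<forall>s a. us s a > 0) \<and>
     (\<forall>u. (\<forall>s a. u s a > 0) \<longrightarrow> Efun \<alpha> \<tau> \<gamma> P r vs u \<le> Efun \<alpha> \<tau> \<gamma> P r vs us) \<and>
     (\<forall>v. Efun \<alpha> \<tau> \<gamma> P r vs us \<le> Efun \<alpha> \<tau> \<gamma> P r v us)"

end

theory Submission
  imports Defs
begin

(*
  At the saddle point, stationarity in v gives alpha v* = K^T u*, and stationarity in u
  (Gibbs' variational principle) gives r - K v* = tau ln pi*, where pi* = u* / utilde u* is the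
  saddle policy.  In the deviations x = v - v*, y = u - u* the flow then has the Lyapunov function
    W = alpha/2 |x|^2 + tau * sum_sa KL(u*_sa || u_sa)      (generalised KL divergence)
  with W' = -alpha |x|^2 - tau <y, ln pi - ln pi*> <= 0, so u stays in a compact subset of the open
  orthant.  W does not dissipate the row masses utilde u, so it is perturbed to
  V = W - eps <x, K^T y>.  Since pi* turns P into a stochastic matrix and gamma < 1, K^T is
  invertible on the masses, whence |y|^2 <= C (|K^T y|^2 + |pi - pi*|^2).  For small eps this
  makes V comparable to |x|^2 + |y|^2 with V' <= -c V, and Groenwall's inequality concludes.
*)

lemma two_mult_le_weighted_squares:
  fixes a b c :: real
  assumes "c > 0"
  shows "2 * a * b \<le> c * a\<^sup>2 + b\<^sup>2 / c"
proof -
  have "0 \<le> (c * a - b)\<^sup>2 / c" using assms by simp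
  also have "\<dots> = c * a\<^sup>2 + b\<^sup>2 / c - 2 * a * b" using assms by (simp add: power2_eq_square field_simps)
  finally show ?thesis by simp
qed

lemma square_add_le:
  fixes a b :: real
  shows "(a + b)\<^sup>2 \<le> 2 * a\<^sup>2 + 2 * b\<^sup>2"
  using sum_squares_bound[of a b] by (simp add: power2_sum)

lemma square_diff_le:
  fixes a b :: real
  shows "(a - b)\<^sup>2 \<le> 2 * a\<^sup>2 + 2 * b\<^sup>2"
  using square_add_le[of a "- b"] by simp

lemma abs_ln_diff_le:
  fixes a b m :: real
  assumes "m > 0" "a \<ge> m" "b \<ge> m"
  shows "\<bar>ln a - ln b\<bar> \<le> \<bar>a - b\<bar> / m"
proof -
  have "ln x - ln y \<le> \<bar>a - b\<bar> / m" if "x \<ge> m" "y \<ge> m" "\<bar>x - y\<bar> = \<bar>a - b\<bar>" for x y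
  proof -
    have "ln (x / y) \<le> x / y - 1" using that assms by (intro ln_le_minus_one) auto
    then have "ln x - ln y \<le> (x - y) / y" using that assms by (simp add: ln_div field_simps)
    also have "\<dots> \<le> \<bar>a - b\<bar> / m" using that assms by (intro frac_le) auto
    finally show ?thesis .
  qed
  from this[of a b] this[of b a] show ?thesis using assms by (auto simp: abs_minus_commute)
qed

lemma le_sqrt_mult_exp_of_square_le:
  fixes x K c t :: real
  assumes "x\<^sup>2 \<le> K * exp (- c * t)"
  shows "x \<le> sqrt K * exp (- (c / 2) * t)"
proof -
  have "0 \<le> K * exp (- c * t)" using order_trans[OF zero_le_power2 assms] .
  then have "K \<ge> 0" by (simp add: zero_le_mult_iff)
  have "- (c / 2) * t + - (c / 2) * t = - c * t" by simp
  then have "(exp (- (c / 2) * t))\<^sup>2 = exp (- c * t)" by (simp add: power2_eq_square mult_exp_exp)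
  then have "(sqrt K * exp (- (c / 2) * t))\<^sup>2 = K * exp (- c * t)"
    using \<open>K \<ge> 0\<close> by (simp only: power_mult_distrib real_sqrt_pow2)
  then have "x\<^sup>2 \<le> (sqrt K * exp (- (c / 2) * t))\<^sup>2" using assms by simp
  moreover have "0 \<le> sqrt K * exp (- (c / 2) * t)" using \<open>K \<ge> 0\<close> by simp
  ultimately show ?thesis by (rule power2_le_imp_le)
qed

lemma sum_squares_le_square_sum_abs:
  fixes w :: "'a \<Rightarrow> real"
  assumes "finite I"
  shows "(\<Sum>i\<in>I. (w i)\<^sup>2) \<le> (\<Sum>i\<in>I. \<bar>w i\<bar>)\<^sup>2"
proof -
  have "(w i)\<^sup>2 \<le> \<bar>w i\<bar> * (\<Sum>i\<in>I. \<bar>w i\<bar>)" if "i \<in> I" for i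
    using member_le_sum[OF that _ assms, of "\<lambda>i. \<bar>w i\<bar>"]
    by (metis abs_ge_zero mult_left_mono power2_abs power2_eq_square)
  then have "(\<Sum>i\<in>I. (w i)\<^sup>2) \<le> (\<Sum>i\<in>I. \<bar>w i\<bar> * (\<Sum>i\<in>I. \<bar>w i\<bar>))" by (rule sum_mono)
  then show ?thesis by (simp add: sum_distrib_right[symmetric] power2_eq_square)
qed

lemma finite_UNIV_ex_pos_lower_bound:
  fixes f :: "'a::finite \<Rightarrow> real"
  assumes "\<And>i. f i > 0"
  shows "\<exists>m>0. \<forall>i. m \<le> f i"
  using assms by (intro exI[of _ "Min (range f)"]) auto

lemma finite_UNIV_ex_upper_bound:
  fixes f :: "'a::finite \<Rightarrow> real"
  shows "\<exists>M. \<forall>i. f i \<le> M"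
  by (intro exI[of _ "Max (range f)"]) auto

lemma sum_sum_UNIV_eq_sum_pairs:
  fixes g :: "'a::finite \<Rightarrow> 'b::finite \<Rightarrow> 'c::comm_monoid_add"
  shows "(\<Sum>i\<in>UNIV. \<Sum>j\<in>UNIV. g i j) = (\<Sum>p\<in>UNIV. g (fst p) (snd p))"
  by (simp add: sum.cartesian_product UNIV_Times_UNIV[symmetric] case_prod_beta del: UNIV_Times_UNIV)

lemma Cauchy_Schwarz_ineq_sum_sum:
  fixes k y :: "'a::finite \<Rightarrow> 'b::finite \<Rightarrow> real"
  shows "(\<Sum>i\<in>UNIV. \<Sum>j\<in>UNIV. k i j * y i j)\<^sup>2
    \<le> (\<Sum>i\<in>UNIV. \<Sum>j\<in>UNIV. (k i j)\<^sup>2) * (\<Sum>i\<in>UNIV. \<Sum>j\<in>UNIV. (y i j)\<^sup>2)"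
  unfolding sum_sum_UNIV_eq_sum_pairs by (rule Cauchy_Schwarz_ineq_sum)

lemma sum_abs_add_sum_sum_abs_squared_le:
  fixes x :: "'a::finite \<Rightarrow> real" and y :: "'a \<Rightarrow> 'b::finite \<Rightarrow> real"
  shows "((\<Sum>i\<in>UNIV. \<bar>x i\<bar>) + (\<Sum>i\<in>UNIV. \<Sum>j\<in>UNIV. \<bar>y i j\<bar>))\<^sup>2
    \<le> 2 * (CARD('a) + CARD('a) * CARD('b))
        * ((\<Sum>i\<in>UNIV. (x i)\<^sup>2) + (\<Sum>i\<in>UNIV. \<Sum>j\<in>UNIV. (y i j)\<^sup>2))"
proof -
  have x: "(\<Sum>i\<in>UNIV. \<bar>x i\<bar>)\<^sup>2 \<le> CARD('a) * (\<Sum>i\<in>UNIV. (x i)\<^sup>2)"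
    using sum_squared_le_sum_of_squares[of "\<lambda>i. \<bar>x i\<bar>" UNIV] by (simp add: mult.commute)
  have "(\<Sum>p\<in>UNIV. \<bar>y (fst p) (snd p)\<bar>)\<^sup>2 \<le> CARD('a \<times> 'b) * (\<Sum>p\<in>UNIV. (y (fst p) (snd p))\<^sup>2)"
    using sum_squared_le_sum_of_squares[of "\<lambda>p. \<bar>y (fst p) (snd p)\<bar>" UNIV] by (simp add: mult.commute)
  then have y: "(\<Sum>i\<in>UNIV. \<Sum>j\<in>UNIV. \<bar>y i j\<bar>)\<^sup>2 \<le> CARD('a) * CARD('b) * (\<Sum>i\<in>UNIV. \<Sum>j\<in>UNIV. (y i j)\<^sup>2)"
    unfolding sum_sum_UNIV_eq_sum_pairs by simp
  have "((\<Sum>i\<in>UNIV. \<bar>x i\<bar>) + (\<Sum>i\<in>UNIV. \<Sum>j\<in>UNIV. \<bar>y i j\<bar>))\<^sup>2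
      \<le> 2 * (\<Sum>i\<in>UNIV. \<bar>x i\<bar>)\<^sup>2 + 2 * (\<Sum>i\<in>UNIV. \<Sum>j\<in>UNIV. \<bar>y i j\<bar>)\<^sup>2"
    by (rule square_add_le)
  also have "\<dots> \<le> 2 * (CARD('a) * (\<Sum>i\<in>UNIV. (x i)\<^sup>2))
      + 2 * (CARD('a) * CARD('b) * (\<Sum>i\<in>UNIV. \<Sum>j\<in>UNIV. (y i j)\<^sup>2))"
    using x y by linarith
  also have "\<dots> \<le> 2 * (CARD('a) + CARD('a) * CARD('b))
      * ((\<Sum>i\<in>UNIV. (x i)\<^sup>2) + (\<Sum>i\<in>UNIV. \<Sum>j\<in>UNIV. (y i j)\<^sup>2))"
    by (simp add: algebra_simps sum_nonneg)
  finally show ?thesis .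
qed

lemma sum_mult_le_weighted_sum_squares:
  fixes x y :: "'a \<Rightarrow> real"
  assumes "c > 0"
  shows "(\<Sum>i\<in>I. x i * y i) \<le> c / 2 * (\<Sum>i\<in>I. (x i)\<^sup>2) + (\<Sum>i\<in>I. (y i)\<^sup>2) / (2 * c)"
proof -
  have "x i * y i \<le> c / 2 * (x i)\<^sup>2 + (y i)\<^sup>2 / (2 * c)" for i
    using two_mult_le_weighted_squares[OF assms, of "x i" "y i"] assms by (simp add: field_simps)
  then have "(\<Sum>i\<in>I. x i * y i) \<le> (\<Sum>i\<in>I. c / 2 * (x i)\<^sup>2 + (y i)\<^sup>2 / (2 * c))"
    by (rule sum_mono)
  then show ?thesis by (simp add: sum.distrib sum_distrib_left sum_divide_distrib)
qed

lemma sum_abs_le_sum_abs_sub_stochastic: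
  fixes w :: "'n::finite \<Rightarrow> real" and c :: "'n \<Rightarrow> 'n \<Rightarrow> real"
  assumes c_nonneg: "\<And>i j. c i j \<ge> 0" and c_stoch: "\<And>i. (\<Sum>j\<in>UNIV. c i j) = 1"
    and "\<gamma> \<ge> 0"
  shows "(1 - \<gamma>) * (\<Sum>i\<in>UNIV. \<bar>w i\<bar>) \<le> (\<Sum>j\<in>UNIV. \<bar>w j - \<gamma> * (\<Sum>i\<in>UNIV. w i * c i j)\<bar>)"
proof -
  have "\<bar>w j\<bar> \<le> \<bar>w j - \<gamma> * (\<Sum>i\<in>UNIV. w i * c i j)\<bar> + \<gamma> * (\<Sum>i\<in>UNIV. \<bar>w i\<bar> * c i j)" for j
  proof -
    have "\<bar>\<Sum>i\<in>UNIV. w i * c i j\<bar> \<le> (\<Sum>i\<in>UNIV. \<bar>w i\<bar> * c i j)"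
      using sum_abs[of "\<lambda>i. w i * c i j" UNIV] c_nonneg by (simp add: abs_mult)
    then have "\<bar>\<gamma> * (\<Sum>i\<in>UNIV. w i * c i j)\<bar> \<le> \<gamma> * (\<Sum>i\<in>UNIV. \<bar>w i\<bar> * c i j)"
      using \<open>\<gamma> \<ge> 0\<close> by (simp add: abs_mult mult_left_mono)
    then show ?thesis by linarith
  qed
  then have "(\<Sum>j\<in>UNIV. \<bar>w j\<bar>)
      \<le> (\<Sum>j\<in>UNIV. \<bar>w j - \<gamma> * (\<Sum>i\<in>UNIV. w i * c i j)\<bar> + \<gamma> * (\<Sum>i\<in>UNIV. \<bar>w i\<bar> * c i j))"
    by (rule sum_mono)
  also have "\<dots> = (\<Sum>j\<in>UNIV. \<bar>w j - \<gamma> * (\<Sum>i\<in>UNIV. w i * c i j)\<bar>)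
      + \<gamma> * (\<Sum>j\<in>UNIV. \<Sum>i\<in>UNIV. \<bar>w i\<bar> * c i j)"
    by (simp add: sum.distrib sum_distrib_left)
  also have "(\<Sum>j\<in>UNIV. \<Sum>i\<in>UNIV. \<bar>w i\<bar> * c i j) = (\<Sum>i\<in>UNIV. \<bar>w i\<bar>)"
    by (subst sum.swap) (simp add: sum_distrib_left[symmetric] c_stoch)
  finally show ?thesis by (simp add: algebra_simps)
qed

lemma sum_squares_le_sub_stochastic:
  fixes w :: "'n::finite \<Rightarrow> real" and c :: "'n \<Rightarrow> 'n \<Rightarrow> real"
  assumes "\<And>i j. c i j \<ge> 0" "\<And>i. (\<Sum>j\<in>UNIV. c i j) = 1" "0 \<le> \<gamma>" "\<gamma> < 1"
  shows "(\<Sum>i\<in>UNIV. (w i)\<^sup>2)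
    \<le> CARD('n) / (1 - \<gamma>)\<^sup>2 * (\<Sum>j\<in>UNIV. (w j - \<gamma> * (\<Sum>i\<in>UNIV. w i * c i j))\<^sup>2)"
proof -
  define z where "z j = w j - \<gamma> * (\<Sum>i\<in>UNIV. w i * c i j)" for j
  have "((1 - \<gamma>) * (\<Sum>i\<in>UNIV. \<bar>w i\<bar>))\<^sup>2 \<le> (\<Sum>j\<in>UNIV. \<bar>z j\<bar>)\<^sup>2"
    unfolding z_def using sum_abs_le_sum_abs_sub_stochastic[OF assms(1-3), of w] assms(4)
    by (intro power_mono) (auto intro: sum_nonneg)
  also have "\<dots> \<le> CARD('n) * (\<Sum>j\<in>UNIV. (z j)\<^sup>2)"
    using sum_squared_le_sum_of_squares[of "\<lambda>j. \<bar>z j\<bar>" UNIV] by (simp add: mult.commute)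
  finally have "(1 - \<gamma>)\<^sup>2 * (\<Sum>i\<in>UNIV. \<bar>w i\<bar>)\<^sup>2 \<le> CARD('n) * (\<Sum>j\<in>UNIV. (z j)\<^sup>2)"
    by (simp only: power_mult_distrib)
  moreover have "(1 - \<gamma>)\<^sup>2 > 0" using assms(4) by simp
  ultimately have "(\<Sum>i\<in>UNIV. \<bar>w i\<bar>)\<^sup>2 \<le> CARD('n) / (1 - \<gamma>)\<^sup>2 * (\<Sum>j\<in>UNIV. (z j)\<^sup>2)"
    by (simp add: pos_le_divide_eq mult.commute)
  then show ?thesis unfolding z_def[symmetric]
    using sum_squares_le_square_sum_abs[of UNIV w] by simp
qed

section \<open>Generalised Kullback--Leibler divergence\<close>

text \<open>The generalised Kullback--Leibler divergence \<open>w ln (w / z) - w + z\<close> of \<open>w\<close> from \<open>z\<close>,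
  i.e. the Bregman divergence of \<open>x ln x\<close>.\<close>
definition gen_kl :: "real \<Rightarrow> real \<Rightarrow> real" where
  "gen_kl z w = z - w - w * (ln z - ln w)"

lemma gen_kl_ge_sqrt_diff_squared:
  assumes "z > 0" "w > 0"
  shows "(sqrt z - sqrt w)\<^sup>2 \<le> gen_kl z w"
proof -
  define a where "a = sqrt z"
  define b where "b = sqrt w"
  have ab: "a > 0" "b > 0" "z = a\<^sup>2" "w = b\<^sup>2" using assms by (auto simp: a_def b_def)
  have "ln (a / b) \<le> a / b - 1" using ab by (intro ln_le_minus_one) auto
  moreover have "ln z - ln w = 2 * ln (a / b)"
    using ab by (simp add: ln_div ln_mult power2_eq_square)
  ultimately have "w * (ln z - ln w) \<le> b\<^sup>2 * (2 * (a / b - 1))"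
    using ab by (simp add: mult_left_mono)
  also have "\<dots> = 2 * a * b - 2 * b\<^sup>2" using ab by (simp add: power2_eq_square field_simps)
  finally show ?thesis unfolding gen_kl_def a_def[symmetric] b_def[symmetric] using ab
    by (simp add: power2_eq_square algebra_simps)
qed

lemma gen_kl_nonneg: "z > 0 \<Longrightarrow> w > 0 \<Longrightarrow> 0 \<le> gen_kl z w"
  using gen_kl_ge_sqrt_diff_squared by (meson order_trans zero_le_power2)

lemma square_diff_le_gen_kl:
  assumes "z > 0" "w > 0" "z \<le> M" "w \<le> M"
  shows "(z - w)\<^sup>2 \<le> 4 * M * gen_kl z w"
proof -
  have sq: "(sqrt z)\<^sup>2 = z" "(sqrt w)\<^sup>2 = w" using assms by simp_all
  have "(sqrt z + sqrt w)\<^sup>2 \<le> 2 * z + 2 * w" using square_add_le[of "sqrt z" "sqrt w"] sq by simp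
  also have "\<dots> \<le> 4 * M" using assms by simp
  finally have sum_le: "(sqrt z + sqrt w)\<^sup>2 \<le> 4 * M" .
  have "(sqrt z - sqrt w) * (sqrt z + sqrt w) = z - w" using assms by (simp add: algebra_simps)
  then have "(z - w)\<^sup>2 = (sqrt z - sqrt w)\<^sup>2 * (sqrt z + sqrt w)\<^sup>2"
    by (simp flip: power_mult_distrib)
  also have "\<dots> \<le> gen_kl z w * (4 * M)"
    using gen_kl_ge_sqrt_diff_squared[OF assms(1,2)] gen_kl_nonneg[OF assms(1,2)] sum_le by (intro mult_mono) auto
  finally show ?thesis by (simp add: mult.commute)
qed

lemma gen_kl_le:
  assumes "z > 0" "w > 0"
  shows "gen_kl z w \<le> (z - w)\<^sup>2 / z"
proof -
  have "ln (w / z) \<le> w / z - 1" using assms by (intro ln_le_minus_one) auto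
  then have "w * (ln w - ln z) \<le> w * (w / z - 1)"
    using assms by (intro mult_left_mono) (auto simp: ln_div)
  then have "gen_kl z w \<le> z - w + w * (w / z - 1)" unfolding gen_kl_def by (simp add: algebra_simps)
  also have "\<dots> = (z - w)\<^sup>2 / z" using assms by (simp add: field_simps power2_eq_square)
  finally show ?thesis .
qed

lemma le_of_gen_kl_le:
  assumes "z > 0" "w > 0" "gen_kl z w \<le> B"
  shows "z \<le> (sqrt w + sqrt B)\<^sup>2"
proof -
  have "(sqrt z - sqrt w)\<^sup>2 \<le> B" using gen_kl_ge_sqrt_diff_squared assms by fastforce
  then have "\<bar>sqrt z - sqrt w\<bar> \<le> sqrt B" using real_sqrt_le_mono by fastforce
  then have "sqrt z \<le> sqrt w + sqrt B" by linarith
  then have "(sqrt z)\<^sup>2 \<le> (sqrt w + sqrt B)\<^sup>2" using assms by (intro power_mono) auto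
  then show ?thesis using assms by simp
qed

lemma ge_of_gen_kl_le:
  assumes "z > 0" "w > 0" "gen_kl z w \<le> B"
  shows "w * exp (- ((B + w) / w)) \<le> z"
proof -
  have "w * (ln w - ln z) \<le> B + w" using assms unfolding gen_kl_def by (simp add: algebra_simps)
  then have "ln (w / z) \<le> (B + w) / w" using assms by (simp add: ln_div field_simps)
  then have "w / z \<le> exp ((B + w) / w)" using assms by (metis exp_le_cancel_iff exp_ln divide_pos_pos)
  then have "w * exp (- ((B + w) / w)) \<le> z * exp ((B + w) / w) * exp (- ((B + w) / w))"
    using assms by (intro mult_right_mono) (auto simp: field_simps)
  also have "\<dots> = z" by (simp add: mult.assoc exp_minus_inverse)
  finally show ?thesis .
qed

text \<open>A weak Pinsker inequality: the KL divergence of probability vectors is a sum of \<open>gen_kl\<close>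
  terms, each bounded below by \<open>(p - q)\<^sup>2 / 4\<close> because \<open>p, q \<le> 1\<close>.\<close>
lemma sum_square_diff_le_kl:
  fixes p q :: "'a \<Rightarrow> real"
  assumes "finite I" and "\<And>i. i \<in> I \<Longrightarrow> p i > 0" "\<And>i. i \<in> I \<Longrightarrow> q i > 0"
    and "(\<Sum>i\<in>I. p i) = 1" "(\<Sum>i\<in>I. q i) = 1"
  shows "(\<Sum>i\<in>I. (p i - q i)\<^sup>2) / 4 \<le> (\<Sum>i\<in>I. p i * (ln (p i) - ln (q i)))"
proof -
  have le1: "p i \<le> 1" "q i \<le> 1" if "i \<in> I" for i
    using member_le_sum[of i I p] member_le_sum[of i I q] assms that by (auto simp: less_imp_le)
  have "(\<Sum>i\<in>I. (p i - q i)\<^sup>2) / 4 = (\<Sum>i\<in>I. (q i - p i)\<^sup>2 / 4)"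
    by (simp add: sum_divide_distrib power2_commute)
  also have "\<dots> \<le> (\<Sum>i\<in>I. gen_kl (q i) (p i))"
    using square_diff_le_gen_kl[of "q _" "p _" 1] assms le1 by (intro sum_mono) fastforce
  also have "\<dots> = (\<Sum>i\<in>I. p i * (ln (p i) - ln (q i)))"
    using assms by (simp add: gen_kl_def sum_subtractf sum.distrib algebra_simps)
  finally show ?thesis .
qed

lemma DERIV_nonpos_imp_antimono_within_nonneg:
  fixes f f' :: "real \<Rightarrow> real"
  assumes deriv: "\<And>t. t \<ge> 0 \<Longrightarrow> (f has_real_derivative f' t) (at t within {0..})"
    and nonpos: "\<And>t. t \<ge> 0 \<Longrightarrow> f' t \<le> 0" and "0 \<le> a" "a \<le> b"
  shows "f b \<le> f a"
proof (rule DERIV_nonpos_imp_decreasing_open[OF \<open>a \<le> b\<close>])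
  fix t assume "a < t" "t < b"
  then have "(f has_real_derivative f' t) (at t)"
    using deriv[of t] \<open>0 \<le> a\<close> at_within_interior[of t "{0..}"] by auto
  then show "\<exists>y. (f has_real_derivative y) (at t) \<and> y \<le> 0" using nonpos[of t] \<open>a < t\<close> \<open>0 \<le> a\<close> by auto
next
  have "continuous (at t within {a..b}) f" if "t \<in> {a..b}" for t
    using deriv[of t] that \<open>0 \<le> a\<close> DERIV_continuous continuous_within_subset[of t "{0..}" f "{a..b}"]
    by auto
  then show "continuous_on {a..b} f" using continuous_on_eq_continuous_within by blast
qed

lemma exp_decay_of_DERIV_le:
  fixes V V' :: "real \<Rightarrow> real"
  assumes deriv: "\<And>t. t \<ge> 0 \<Longrightarrow> (V has_real_derivative V' t) (at t within {0..})"
    and rate: "\<And>t. t \<ge> 0 \<Longrightarrow> V' t \<le> - c * V t" and "t \<ge> 0"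
  shows "V t \<le> V 0 * exp (- c * t)"
proof -
  have "V t * exp (c * t) \<le> V 0 * exp (c * 0)"
  proof (rule DERIV_nonpos_imp_antimono_within_nonneg[where f = "\<lambda>t. V t * exp (c * t)"])
    fix s :: real assume "s \<ge> 0"
    have "((\<lambda>t. exp (c * t)) has_real_derivative exp (c * s) * c) (at s within {0..})"
      using DERIV_chain2[OF DERIV_exp DERIV_cmult[OF DERIV_ident, of c]] by simp
    from DERIV_mult[OF deriv[OF \<open>s \<ge> 0\<close>] this]
    show "((\<lambda>t. V t * exp (c * t)) has_real_derivative (V' s + c * V s) * exp (c * s)) (at s within {0..})"
      by (rule DERIV_cong) (simp add: algebra_simps)
    show "(V' s + c * V s) * exp (c * s) \<le> 0"
      using rate[OF \<open>s \<ge> 0\<close>] by (simp add: mult_nonpos_nonneg)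
  qed (use \<open>t \<ge> 0\<close> in auto)
  then have "V t * exp (c * t) * exp (- c * t) \<le> V 0 * exp (- c * t)" by (intro mult_right_mono) auto
  then show ?thesis by (simp add: mult.assoc exp_add[symmetric])
qed

section \<open>Stationarity of the saddle point\<close>

locale mdp_saddle =
  fixes P :: "'A::finite \<Rightarrow> 'S::finite \<Rightarrow> 'S \<Rightarrow> real"
    and r :: "'S \<Rightarrow> 'A \<Rightarrow> real"
    and \<gamma> \<tau> \<alpha> :: real
    and vs :: "'S \<Rightarrow> real" and us :: "'S \<Rightarrow> 'A \<Rightarrow> real"
  assumes tau_pos: "\<tau> > 0" and alpha_pos: "\<alpha> > 0"
    and saddle: "is_saddle \<alpha> \<tau> \<gamma> P r vs us"
begin

abbreviation "K \<equiv> Kmat \<gamma> P"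
abbreviation "E \<equiv> Efun \<alpha> \<tau> \<gamma> P r"

lemma us_pos: "us s a > 0"
  using saddle unfolding is_saddle_def by auto

lemma utilde_us_pos: "utilde us s > 0"
  unfolding utilde_def using us_pos by (intro sum_pos) auto

definition pol_star :: "'S \<Rightarrow> 'A \<Rightarrow> real" where
  "pol_star s a = us s a / utilde us s"

lemma pol_star_pos: "pol_star s a > 0"
  unfolding pol_star_def using utilde_us_pos us_pos by simp

lemma sum_pol_star: "(\<Sum>a\<in>UNIV. pol_star s a) = 1"
  unfolding pol_star_def using utilde_us_pos[of s] by (simp add: sum_divide_distrib[symmetric] utilde_def)

lemma utilde_mult_pol_star: "utilde us s * pol_star s a = us s a"
  unfolding pol_star_def using utilde_us_pos[of s] by simp

lemma saddle_v_stationary: "\<alpha> * vs j = (\<Sum>s\<in>UNIV. \<Sum>a\<in>UNIV. K a s j * us s a)"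
proof -
  define L where "L = \<alpha> * vs j - (\<Sum>s\<in>UNIV. \<Sum>a\<in>UNIV. K a s j * us s a)"
  have "E (\<lambda>i. vs i + (if i = j then c else 0)) us - E vs us = c * L + \<alpha> / 2 * c\<^sup>2" for c
  proof -
    have "(\<Sum>i\<in>UNIV. (vs i + (if i = j then c else 0))\<^sup>2)
        = (\<Sum>i\<in>UNIV. (vs i)\<^sup>2 + (if i = j then 2 * c * vs j + c\<^sup>2 else 0))"
      by (rule sum.cong) (auto simp: power2_eq_square algebra_simps)
    moreover have "(\<Sum>s'\<in>UNIV. K a s s' * (vs s' + (if s' = j then c else 0)))
        = (\<Sum>s'\<in>UNIV. K a s s' * vs s' + (if s' = j then c * K a s j else 0))" for a s
      by (rule sum.cong) (auto simp: algebra_simps)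
    ultimately show ?thesis
      unfolding Efun_def L_def
      by (simp add: algebra_simps sum_subtractf sum.distrib sum_distrib_left power2_eq_square)
  qed
  moreover have "E vs us \<le> E w us" for w using saddle unfolding is_saddle_def by blast
  ultimately have "0 \<le> c * L + \<alpha> / 2 * c\<^sup>2" for c by (metis diff_ge_0_iff_ge)
  from this[of "- L / \<alpha>"] have "L\<^sup>2 \<le> 0"
    using alpha_pos by (simp add: power2_eq_square field_simps)
  then show ?thesis unfolding L_def by simp
qed

text \<open>\<open>q_star\<close> is the soft \<open>Q\<close>-function at \<open>vs\<close>, and \<open>row_value w s\<close> the part of \<open>E vs\<close> that
  depends on the row \<open>w = u s\<close>.\<close>
definition q_star :: "'S \<Rightarrow> 'A \<Rightarrow> real" where
  "q_star s a = r s a - (\<Sum>s'\<in>UNIV. K a s s' * vs s')"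

definition row_value :: "('A \<Rightarrow> real) \<Rightarrow> 'S \<Rightarrow> real" where
  "row_value w s = (\<Sum>a\<in>UNIV. w a * q_star s a) - \<tau> * (\<Sum>a\<in>UNIV. w a * ln (w a / (\<Sum>b\<in>UNIV. w b)))"

lemma Efun_vs_eq_sum_row_value: "E vs w = \<alpha> / 2 * (\<Sum>s\<in>UNIV. (vs s)\<^sup>2) + (\<Sum>s\<in>UNIV. row_value (w s) s)"
  unfolding Efun_def row_value_def utilde_def q_star_def
  by (simp add: sum_subtractf sum_distrib_left algebra_simps sum.distrib)

lemma row_value_le_saddle:
  assumes "\<And>a. q a > 0"
  shows "row_value q s \<le> row_value (us s) s"
proof -
  have "\<forall>s' a. (us(s := q)) s' a > 0" using assms us_pos by auto
  then have "E vs (us(s := q)) \<le> E vs us" using saddle unfolding is_saddle_def by blast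
  moreover have "(\<Sum>s'\<in>UNIV. row_value ((us(s := q)) s') s')
      = (\<Sum>s'\<in>UNIV. row_value (us s') s') + (row_value q s - row_value (us s) s)"
    by (simp add: sum.remove[of UNIV s] algebra_simps)
  ultimately show ?thesis by (simp add: Efun_vs_eq_sum_row_value)
qed

lemma row_value_scale:
  assumes "c > 0"
  shows "row_value (\<lambda>a. c * q a) s = c * row_value q s"
proof -
  have "(c * q a) / (\<Sum>b\<in>UNIV. c * q b) = q a / (\<Sum>b\<in>UNIV. q b)" for a
    using assms by (simp add: sum_distrib_left[symmetric])
  then show ?thesis unfolding row_value_def by (simp add: sum_distrib_left algebra_simps)
qed

text \<open>The saddle row maximises the positively homogeneous \<open>row_value\<close>, so scaling it by \<open>2\<close>
  and by \<open>1/2\<close> cannot increase the value.\<close>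
lemma row_value_saddle: "row_value (us s) s = 0"
  using row_value_le_saddle[of "\<lambda>a. 2 * us s a" s] row_value_le_saddle[of "\<lambda>a. 1/2 * us s a" s]
    row_value_scale[of 2 "us s" s] row_value_scale[of "1/2" "us s" s] us_pos
  by simp

definition gibbs_norm :: "'S \<Rightarrow> real" where
  "gibbs_norm s = (\<Sum>b\<in>UNIV. exp (q_star s b / \<tau>))"

definition gibbs :: "'S \<Rightarrow> 'A \<Rightarrow> real" where
  "gibbs s a = exp (q_star s a / \<tau>) / gibbs_norm s"

lemma gibbs_norm_pos: "gibbs_norm s > 0"
  unfolding gibbs_norm_def by (intro sum_pos) auto

lemma gibbs_pos: "gibbs s a > 0"
  unfolding gibbs_def using gibbs_norm_pos by simp

lemma sum_gibbs: "(\<Sum>a\<in>UNIV. gibbs s a) = 1"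
  unfolding gibbs_def using gibbs_norm_pos[of s] by (simp add: sum_divide_distrib[symmetric] gibbs_norm_def)

lemma q_star_eq_ln_gibbs: "q_star s a = \<tau> * (ln (gibbs s a) + ln (gibbs_norm s))"
  unfolding gibbs_def using gibbs_norm_pos[of s] tau_pos by (simp add: ln_div)

lemma row_value_gibbs: "row_value (gibbs s) s = \<tau> * ln (gibbs_norm s)"
proof -
  have "row_value (gibbs s) s = (\<Sum>a\<in>UNIV. gibbs s a * (q_star s a - \<tau> * ln (gibbs s a)))"
    unfolding row_value_def sum_gibbs by (simp add: sum_subtractf sum_distrib_left algebra_simps)
  also have "\<dots> = (\<Sum>a\<in>UNIV. gibbs s a) * (\<tau> * ln (gibbs_norm s))"
    unfolding sum_distrib_right by (rule sum.cong) (simp_all add: q_star_eq_ln_gibbs algebra_simps)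
  finally show ?thesis by (simp add: sum_gibbs)
qed

lemma row_value_saddle_eq_kl:
  "row_value (us s) s
    = utilde us s * \<tau> * (ln (gibbs_norm s) - (\<Sum>a\<in>UNIV. pol_star s a * (ln (pol_star s a) - ln (gibbs s a))))"
proof -
  have "row_value (us s) s = (\<Sum>a\<in>UNIV. us s a * (q_star s a - \<tau> * ln (pol_star s a)))"
    unfolding row_value_def pol_star_def utilde_def[symmetric]
    by (simp add: sum_subtractf right_diff_distrib sum_distrib_left mult.left_commute)
  also have "\<dots> = utilde us s * (\<Sum>a\<in>UNIV. pol_star s a * (q_star s a - \<tau> * ln (pol_star s a)))"
    by (simp add: sum_distrib_left mult.assoc flip: utilde_mult_pol_star)
  also have "(\<Sum>a\<in>UNIV. pol_star s a * (q_star s a - \<tau> * ln (pol_star s a)))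
      = \<tau> * (ln (gibbs_norm s) * (\<Sum>a\<in>UNIV. pol_star s a)
          - (\<Sum>a\<in>UNIV. pol_star s a * (ln (pol_star s a) - ln (gibbs s a))))"
    unfolding q_star_eq_ln_gibbs sum_distrib_left sum_distrib_right sum_subtractf[symmetric]
    by (rule sum.cong) (simp_all add: algebra_simps)
  finally show ?thesis by (simp add: sum_pol_star)
qed

text \<open>Gibbs' variational principle: the saddle policy is the softmax of \<open>q_star / \<tau>\<close>.\<close>
lemma saddle_u_stationary: "q_star s a = \<tau> * ln (pol_star s a)"
proof -
  define kl where "kl = (\<Sum>a\<in>UNIV. pol_star s a * (ln (pol_star s a) - ln (gibbs s a)))"
  have "\<tau> * ln (gibbs_norm s) \<le> 0"
    using row_value_le_saddle[of "gibbs s" s] gibbs_pos row_value_saddle[of s] row_value_gibbs[of s]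
    by simp
  then have ln_le: "ln (gibbs_norm s) \<le> 0" using tau_pos by (simp add: mult_le_0_iff)
  have "kl = ln (gibbs_norm s)"
    using row_value_saddle_eq_kl[of s] row_value_saddle utilde_us_pos[of s] tau_pos by (simp add: kl_def)
  moreover have "(\<Sum>b\<in>UNIV. (pol_star s b - gibbs s b)\<^sup>2) / 4 \<le> kl"
    unfolding kl_def using pol_star_pos gibbs_pos sum_pol_star sum_gibbs
    by (intro sum_square_diff_le_kl) auto
  moreover have "0 \<le> (\<Sum>b\<in>UNIV. (pol_star s b - gibbs s b)\<^sup>2)" by (simp add: sum_nonneg)
  ultimately have "ln (gibbs_norm s) = 0" "(\<Sum>b\<in>UNIV. (pol_star s b - gibbs s b)\<^sup>2) = 0"
    using ln_le by linarith+
  then have "pol_star s a = gibbs s a" "ln (gibbs_norm s) = 0" by (simp_all add: sum_nonneg_eq_0_iff)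
  then show ?thesis by (simp add: q_star_eq_ln_gibbs)
qed

definition trans_star :: "'S \<Rightarrow> 'S \<Rightarrow> real" where
  "trans_star s j = (\<Sum>a\<in>UNIV. pol_star s a * P a s j)"

lemma sum_K_mult_pol_star:
  "(\<Sum>s\<in>UNIV. \<Sum>a\<in>UNIV. K a s j * (w s * pol_star s a)) = w j - \<gamma> * (\<Sum>s\<in>UNIV. w s * trans_star s j)"
proof -
  have "(\<Sum>a\<in>UNIV. K a s j * (w s * pol_star s a))
      = (if s = j then 1 else 0) * w s * (\<Sum>a\<in>UNIV. pol_star s a)
        - \<gamma> * w s * (\<Sum>a\<in>UNIV. pol_star s a * P a s j)" for s
    unfolding Kmat_def by (simp add: algebra_simps sum_subtractf sum_distrib_left)
  then have "(\<Sum>a\<in>UNIV. K a s j * (w s * pol_star s a))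
      = (if s = j then w s else 0) - \<gamma> * (w s * trans_star s j)" for s
    by (simp add: sum_pol_star trans_star_def)
  then show ?thesis by (simp add: sum_subtractf sum_distrib_left)
qed

end

section \<open>The flow and its Lyapunov function\<close>

locale saddle_flow = mdp_saddle P r \<gamma> \<tau> \<alpha> vs us
  for P :: "'A::finite \<Rightarrow> 'S::finite \<Rightarrow> 'S \<Rightarrow> real" and r \<gamma> \<tau> \<alpha> vs us +
  fixes v :: "real \<Rightarrow> 'S \<Rightarrow> real" and u :: "real \<Rightarrow> 'S \<Rightarrow> 'A \<Rightarrow> real"
  assumes P_nonneg: "\<forall>a s s'. P a s s' \<ge> 0"
    and P_stoch: "\<forall>a s. (\<Sum>s'\<in>UNIV. P a s s') = 1"
    and gamma_pos: "0 < \<gamma>" and gamma_lt_1: "\<gamma> < 1"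
    and u_pos: "\<forall>t\<ge>0. \<forall>s a. u t s a > 0"
    and v_ode: "\<forall>t\<ge>0. \<forall>s'. ((\<lambda>t. v t s') has_real_derivative
          (- (v t s' - (1 / \<alpha>) * (\<Sum>s\<in>UNIV. \<Sum>a\<in>UNIV. Kmat \<gamma> P a s s' * u t s a))))
          (at t within {0..})"
    and u_ode: "\<forall>t\<ge>0. \<forall>s a. ((\<lambda>t. u t s a) has_real_derivative
          (- u t s a * (ln (u t s a / utilde (u t) s)
              - (1 / \<tau>) * (r s a - (\<Sum>s'\<in>UNIV. Kmat \<gamma> P a s s' * v t s')))))
          (at t within {0..})"
begin

definition vdev :: "real \<Rightarrow> 'S \<Rightarrow> real" where
  "vdev t j = v t j - vs j"

definition udev :: "real \<Rightarrow> 'S \<Rightarrow> 'A \<Rightarrow> real" where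
  "udev t s a = u t s a - us s a"

definition pol :: "real \<Rightarrow> 'S \<Rightarrow> 'A \<Rightarrow> real" where
  "pol t s a = u t s a / utilde (u t) s"

definition KT_udev :: "real \<Rightarrow> 'S \<Rightarrow> real" where
  "KT_udev t j = (\<Sum>s\<in>UNIV. \<Sum>a\<in>UNIV. K a s j * udev t s a)"

definition K_vdev :: "real \<Rightarrow> 'S \<Rightarrow> 'A \<Rightarrow> real" where
  "K_vdev t s a = (\<Sum>j\<in>UNIV. K a s j * vdev t j)"

definition u_rate :: "real \<Rightarrow> 'S \<Rightarrow> 'A \<Rightarrow> real" where
  "u_rate t s a = u t s a * (ln (pol_star s a) - ln (pol t s a) - K_vdev t s a / \<tau>)"

definition KT_u_rate :: "real \<Rightarrow> 'S \<Rightarrow> real" where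
  "KT_u_rate t j = (\<Sum>s\<in>UNIV. \<Sum>a\<in>UNIV. K a s j * u_rate t s a)"

definition vdev_sq :: "real \<Rightarrow> real" where
  "vdev_sq t = (\<Sum>j\<in>UNIV. (vdev t j)\<^sup>2)"

definition udev_sq :: "real \<Rightarrow> real" where
  "udev_sq t = (\<Sum>s\<in>UNIV. \<Sum>a\<in>UNIV. (udev t s a)\<^sup>2)"

definition KT_udev_sq :: "real \<Rightarrow> real" where
  "KT_udev_sq t = (\<Sum>j\<in>UNIV. (KT_udev t j)\<^sup>2)"

definition pol_dist_sq :: "real \<Rightarrow> real" where
  "pol_dist_sq t = (\<Sum>s\<in>UNIV. \<Sum>a\<in>UNIV. (pol t s a - pol_star s a)\<^sup>2)"

definition pol_gap :: "real \<Rightarrow> real" where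
  "pol_gap t = (\<Sum>s\<in>UNIV. \<Sum>a\<in>UNIV. udev t s a * (ln (pol t s a) - ln (pol_star s a)))"

definition kl_dev :: "real \<Rightarrow> real" where
  "kl_dev t = (\<Sum>s\<in>UNIV. \<Sum>a\<in>UNIV. gen_kl (u t s a) (us s a))"

definition cross :: "real \<Rightarrow> real" where
  "cross t = (\<Sum>j\<in>UNIV. vdev t j * KT_udev t j)"

definition lyap :: "real \<Rightarrow> real" where
  "lyap t = \<alpha> / 2 * vdev_sq t + \<tau> * kl_dev t"

lemma vdev_sq_nonneg: "vdev_sq t \<ge> 0"
  unfolding vdev_sq_def by (simp add: sum_nonneg)

lemma udev_sq_nonneg: "udev_sq t \<ge> 0"
  unfolding udev_sq_def by (simp add: sum_nonneg)

lemma KT_udev_sq_nonneg: "KT_udev_sq t \<ge> 0"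
  unfolding KT_udev_sq_def by (simp add: sum_nonneg)

lemma pol_dist_sq_nonneg: "pol_dist_sq t \<ge> 0"
  unfolding pol_dist_sq_def by (simp add: sum_nonneg)

lemma utilde_u_pos: "t \<ge> 0 \<Longrightarrow> utilde (u t) s > 0"
  unfolding utilde_def using u_pos by (intro sum_pos) auto

lemma pol_pos: "t \<ge> 0 \<Longrightarrow> pol t s a > 0"
  unfolding pol_def using utilde_u_pos[of t s] u_pos by auto

lemma sum_pol: "t \<ge> 0 \<Longrightarrow> (\<Sum>a\<in>UNIV. pol t s a) = 1"
  unfolding pol_def using utilde_u_pos[of t s] by (simp add: sum_divide_distrib[symmetric] utilde_def)

lemma utilde_mult_pol: "t \<ge> 0 \<Longrightarrow> utilde (u t) s * pol t s a = u t s a"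
  unfolding pol_def using utilde_u_pos[of t s] by simp

lemma v_deriv:
  assumes "t \<ge> 0"
  shows "((\<lambda>t. v t j) has_real_derivative KT_udev t j / \<alpha> - vdev t j) (at t within {0..})"
proof -
  have "(\<Sum>s\<in>UNIV. \<Sum>a\<in>UNIV. K a s j * u t s a) = KT_udev t j + \<alpha> * vs j"
    unfolding KT_udev_def udev_def saddle_v_stationary
    by (simp add: right_diff_distrib sum_subtractf)
  moreover have "((\<lambda>t. v t j) has_real_derivative
      - (v t j - (1 / \<alpha>) * (\<Sum>s\<in>UNIV. \<Sum>a\<in>UNIV. K a s j * u t s a))) (at t within {0..})"
    using v_ode assms by blast
  ultimately show ?thesis
    using alpha_pos by (elim DERIV_cong) (simp add: vdev_def field_simps)
qed

lemma u_deriv: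
  assumes "t \<ge> 0"
  shows "((\<lambda>t. u t s a) has_real_derivative u_rate t s a) (at t within {0..})"
proof -
  have "r s a - (\<Sum>j\<in>UNIV. K a s j * v t j) = q_star s a - K_vdev t s a"
    unfolding q_star_def K_vdev_def vdev_def by (simp add: right_diff_distrib sum_subtractf)
  then have eq: "(1 / \<tau>) * (r s a - (\<Sum>j\<in>UNIV. K a s j * v t j)) = ln (pol_star s a) - K_vdev t s a / \<tau>"
    using tau_pos by (simp add: saddle_u_stationary field_simps)
  have "((\<lambda>t. u t s a) has_real_derivative - u t s a * (ln (u t s a / utilde (u t) s)
      - (ln (pol_star s a) - K_vdev t s a / \<tau>))) (at t within {0..})"
    using u_ode assms unfolding eq[symmetric] by blast
  then show ?thesis
    unfolding u_rate_def pol_def by (elim DERIV_cong) (simp add: algebra_simps)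
qed

lemma cross_eq_sum_udev_K_vdev: "cross t = (\<Sum>s\<in>UNIV. \<Sum>a\<in>UNIV. udev t s a * K_vdev t s a)"
proof -
  have "cross t = (\<Sum>j\<in>UNIV. \<Sum>s\<in>UNIV. \<Sum>a\<in>UNIV. udev t s a * K a s j * vdev t j)"
    unfolding cross_def KT_udev_def by (simp add: sum_distrib_left mult_ac)
  also have "\<dots> = (\<Sum>s\<in>UNIV. \<Sum>j\<in>UNIV. \<Sum>a\<in>UNIV. udev t s a * K a s j * vdev t j)"
    by (rule sum.swap)
  also have "\<dots> = (\<Sum>s\<in>UNIV. \<Sum>a\<in>UNIV. \<Sum>j\<in>UNIV. udev t s a * K a s j * vdev t j)"
    by (rule sum.cong[OF refl], rule sum.swap)
  finally show ?thesis unfolding K_vdev_def by (simp add: sum_distrib_left mult_ac)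
qed

lemma vdev_sq_deriv:
  assumes "t \<ge> 0"
  shows "(vdev_sq has_real_derivative 2 * cross t / \<alpha> - 2 * vdev_sq t) (at t within {0..})"
proof -
  have "((\<lambda>t. (v t j - vs j)\<^sup>2) has_real_derivative 2 * vdev t j * (KT_udev t j / \<alpha> - vdev t j))
      (at t within {0..})" for j
    using DERIV_power[OF DERIV_diff[OF v_deriv[OF assms, of j] DERIV_const[of "vs j"]], where n = 2]
    by (elim DERIV_cong) (simp add: vdev_def mult_ac)
  then have "(vdev_sq has_real_derivative (\<Sum>j\<in>UNIV. 2 * vdev t j * (KT_udev t j / \<alpha> - vdev t j)))
      (at t within {0..})"
    unfolding vdev_sq_def[abs_def] vdev_def by (intro DERIV_sum) (simp add: vdev_def)
  then show ?thesis
    unfolding cross_def vdev_sq_def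
    by (elim DERIV_cong) (simp add: sum_distrib_left sum_divide_distrib sum_subtractf algebra_simps power2_eq_square)
qed

lemma kl_dev_deriv:
  assumes "t \<ge> 0"
  shows "(kl_dev has_real_derivative - pol_gap t - cross t / \<tau>) (at t within {0..})"
proof -
  have "((\<lambda>t. gen_kl (u t s a) (us s a)) has_real_derivative
      udev t s a * (ln (pol_star s a) - ln (pol t s a) - K_vdev t s a / \<tau>)) (at t within {0..})" for s a
  proof -
    have pos: "u t s a > 0" using u_pos assms by auto
    define X where "X = ln (pol_star s a) - ln (pol t s a) - K_vdev t s a / \<tau>"
    have rate: "u_rate t s a = u t s a * X" by (simp add: u_rate_def X_def)
    have "((\<lambda>t. u t s a - us s a - us s a * (ln (u t s a) - ln (us s a))) has_real_derivative
        u_rate t s a - 0 - us s a * (inverse (u t s a) * u_rate t s a - 0)) (at t within {0..})"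
      by (intro DERIV_diff DERIV_cmult u_deriv[OF assms] DERIV_const
          DERIV_chain2[OF DERIV_ln[OF pos] u_deriv[OF assms]])
    moreover have "inverse (u t s a) * u_rate t s a = X" using pos by (simp add: rate)
    ultimately show ?thesis
      unfolding gen_kl_def X_def[symmetric] using pos
      by (elim DERIV_cong) (simp add: rate udev_def field_simps)
  qed
  then have "(kl_dev has_real_derivative (\<Sum>s\<in>UNIV. \<Sum>a\<in>UNIV.
      udev t s a * (ln (pol_star s a) - ln (pol t s a) - K_vdev t s a / \<tau>))) (at t within {0..})"
    unfolding kl_dev_def[abs_def] by (intro DERIV_sum)
  then show ?thesis
    unfolding pol_gap_def cross_eq_sum_udev_K_vdev
    by (elim DERIV_cong) (simp add: sum_subtractf sum_negf sum_divide_distrib sum.distrib algebra_simps)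
qed

text \<open>The Lyapunov identity of the flow: the cross terms of the two derivatives cancel.\<close>
lemma lyap_deriv:
  assumes "t \<ge> 0"
  shows "(lyap has_real_derivative - \<alpha> * vdev_sq t - \<tau> * pol_gap t) (at t within {0..})"
proof -
  have "(lyap has_real_derivative \<alpha> / 2 * (2 * cross t / \<alpha> - 2 * vdev_sq t)
      + \<tau> * (- pol_gap t - cross t / \<tau>)) (at t within {0..})"
    unfolding lyap_def[abs_def]
    by (intro DERIV_add DERIV_cmult vdev_sq_deriv[OF assms] kl_dev_deriv[OF assms])
  then show ?thesis using alpha_pos tau_pos by (elim DERIV_cong) (simp add: field_simps)
qed

lemma KT_udev_deriv:
  assumes "t \<ge> 0"
  shows "((\<lambda>t. KT_udev t j) has_real_derivative KT_u_rate t j) (at t within {0..})"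
  unfolding KT_udev_def KT_u_rate_def udev_def
  by (intro DERIV_sum DERIV_cmult DERIV_diff[where E = 0, simplified] u_deriv[OF assms] DERIV_const)

lemma cross_deriv:
  assumes "t \<ge> 0"
  shows "(cross has_real_derivative KT_udev_sq t / \<alpha> - cross t + (\<Sum>j\<in>UNIV. vdev t j * KT_u_rate t j))
    (at t within {0..})"
proof -
  have "((\<lambda>t. vdev t j) has_real_derivative KT_udev t j / \<alpha> - vdev t j) (at t within {0..})" for j
    unfolding vdev_def[abs_def] using DERIV_diff[OF v_deriv[OF assms, of j] DERIV_const[of "vs j"]]
    by (simp add: vdev_def)
  then have "(cross has_real_derivative (\<Sum>j\<in>UNIV.
      (KT_udev t j / \<alpha> - vdev t j) * KT_udev t j + KT_u_rate t j * vdev t j)) (at t within {0..})"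
    unfolding cross_def[abs_def] by (intro DERIV_sum DERIV_mult KT_udev_deriv[OF assms])
  then show ?thesis
    unfolding KT_udev_sq_def cross_def
    by (elim DERIV_cong)
      (simp add: sum.distrib sum_subtractf sum_divide_distrib algebra_simps power2_eq_square)
qed

lemma pol_gap_row_ge:
  assumes "t \<ge> 0"
  shows "utilde us s * (\<Sum>a\<in>UNIV. (pol t s a - pol_star s a)\<^sup>2) / 4
    \<le> (\<Sum>a\<in>UNIV. udev t s a * (ln (pol t s a) - ln (pol_star s a)))"
proof -
  have kl_pol: "(\<Sum>a\<in>UNIV. (pol t s a - pol_star s a)\<^sup>2) / 4
      \<le> (\<Sum>a\<in>UNIV. pol t s a * (ln (pol t s a) - ln (pol_star s a)))"
    using pol_pos[OF assms] pol_star_pos sum_pol[OF assms] sum_pol_star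
    by (intro sum_square_diff_le_kl) auto
  have kl_pol_star: "(\<Sum>a\<in>UNIV. (pol t s a - pol_star s a)\<^sup>2) / 4
      \<le> (\<Sum>a\<in>UNIV. pol_star s a * (ln (pol_star s a) - ln (pol t s a)))"
    using pol_pos[OF assms] pol_star_pos sum_pol[OF assms] sum_pol_star
      sum_square_diff_le_kl[of UNIV "pol_star s" "pol t s"]
    by (simp add: power2_commute)
  have "udev t s a * (ln (pol t s a) - ln (pol_star s a))
      = utilde (u t) s * (pol t s a * (ln (pol t s a) - ln (pol_star s a)))
        + utilde us s * (pol_star s a * (ln (pol_star s a) - ln (pol t s a)))" for a
    unfolding udev_def by (simp add: algebra_simps flip: utilde_mult_pol[OF assms] utilde_mult_pol_star)
  then have "(\<Sum>a\<in>UNIV. udev t s a * (ln (pol t s a) - ln (pol_star s a)))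
      = utilde (u t) s * (\<Sum>a\<in>UNIV. pol t s a * (ln (pol t s a) - ln (pol_star s a)))
        + utilde us s * (\<Sum>a\<in>UNIV. pol_star s a * (ln (pol_star s a) - ln (pol t s a)))"
    by (simp add: sum.distrib sum_distrib_left)
  moreover have "0 \<le> utilde (u t) s * (\<Sum>a\<in>UNIV. pol t s a * (ln (pol t s a) - ln (pol_star s a)))"
  proof -
    have "0 \<le> (\<Sum>a\<in>UNIV. (pol t s a - pol_star s a)\<^sup>2) / 4" by (simp add: sum_nonneg)
    then show ?thesis using kl_pol utilde_u_pos[OF assms, of s] by simp
  qed
  moreover have "utilde us s * (\<Sum>a\<in>UNIV. (pol t s a - pol_star s a)\<^sup>2) / 4
      \<le> utilde us s * (\<Sum>a\<in>UNIV. pol_star s a * (ln (pol_star s a) - ln (pol t s a)))"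
    using mult_left_mono[OF kl_pol_star less_imp_le[OF utilde_us_pos]] by simp
  ultimately show ?thesis by linarith
qed

lemma pol_gap_nonneg:
  assumes "t \<ge> 0"
  shows "0 \<le> pol_gap t"
  unfolding pol_gap_def
proof (rule sum_nonneg)
  fix s
  have "0 \<le> utilde us s * (\<Sum>a\<in>UNIV. (pol t s a - pol_star s a)\<^sup>2) / 4"
    using utilde_us_pos[of s] by (simp add: sum_nonneg)
  then show "0 \<le> (\<Sum>a\<in>UNIV. udev t s a * (ln (pol t s a) - ln (pol_star s a)))"
    using pol_gap_row_ge[OF assms, of s] by linarith
qed

lemma lyap_antimono:
  assumes "t \<ge> 0"
  shows "lyap t \<le> lyap 0"
proof (rule DERIV_nonpos_imp_antimono_within_nonneg[OF lyap_deriv])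
  fix t' :: real assume "t' \<ge> 0"
  then have "0 \<le> \<alpha> * vdev_sq t'" "0 \<le> \<tau> * pol_gap t'"
    using alpha_pos tau_pos vdev_sq_nonneg[of t'] pol_gap_nonneg[of t'] by simp_all
  then show "- \<alpha> * vdev_sq t' - \<tau> * pol_gap t' \<le> 0" by simp
qed (use assms in auto)

lemma gen_kl_le_lyap_0:
  assumes "t \<ge> 0"
  shows "\<tau> * gen_kl (u t s a) (us s a) \<le> lyap 0"
proof -
  have nonneg: "0 \<le> gen_kl (u t s' a') (us s' a')" for s' a'
    using gen_kl_nonneg u_pos us_pos assms by auto
  have "gen_kl (u t s a) (us s a) \<le> (\<Sum>a\<in>UNIV. gen_kl (u t s a) (us s a))"
    using nonneg by (intro member_le_sum) auto
  also have "\<dots> \<le> kl_dev t"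
    unfolding kl_dev_def using nonneg by (intro member_le_sum sum_nonneg) auto
  finally have "\<tau> * gen_kl (u t s a) (us s a) \<le> \<tau> * kl_dev t" using tau_pos by simp
  also have "\<dots> \<le> lyap t" unfolding lyap_def using alpha_pos vdev_sq_nonneg[of t] by simp
  finally show ?thesis using lyap_antimono[OF assms] by simp
qed

text \<open>The Lyapunov function bounds the generalised KL divergence of every coordinate \<open>u t s a\<close>,
  which confines it to a compact subinterval of \<open>(0, \<infinity>)\<close>.\<close>
lemma u_bounded:
  "\<exists>m M. m > 0 \<and> (\<forall>s a. m \<le> us s a \<and> us s a \<le> M) \<and> (\<forall>t\<ge>0. \<forall>s a. m \<le> u t s a \<and> u t s a \<le> M)"
proof -
  define B where "B = lyap 0 / \<tau>"
  have kl_le: "gen_kl (u t s a) (us s a) \<le> B" if "t \<ge> 0" for t s a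
    using gen_kl_le_lyap_0[OF that] tau_pos by (simp add: B_def field_simps)
  obtain M where M: "\<forall>p. (case p of (s, a) \<Rightarrow> max ((sqrt (us s a) + sqrt B)\<^sup>2) (us s a)) \<le> M"
    using finite_UNIV_ex_upper_bound by blast
  obtain m where m: "m > 0"
    "\<forall>p. m \<le> (case p of (s, a) \<Rightarrow> min (us s a * exp (- ((B + us s a) / us s a))) (us s a))"
    using finite_UNIV_ex_pos_lower_bound[of "\<lambda>(s, a). min (us s a * exp (- ((B + us s a) / us s a))) (us s a)"]
      us_pos by auto
  have "m \<le> us s a \<and> us s a \<le> M \<and> (\<forall>t\<ge>0. m \<le> u t s a \<and> u t s a \<le> M)" for s a
  proof (intro conjI allI impI)
    show "m \<le> us s a" "us s a \<le> M" using m(2) M by (fastforce, fastforce)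
    fix t :: real assume "t \<ge> 0"
    then have pos: "u t s a > 0" using u_pos by auto
    show "m \<le> u t s a"
      using ge_of_gen_kl_le[OF pos us_pos kl_le[OF \<open>t \<ge> 0\<close>]] m(2)[rule_format, of "(s, a)"] by simp
    show "u t s a \<le> M"
      using le_of_gen_kl_le[OF pos us_pos kl_le[OF \<open>t \<ge> 0\<close>]] M[rule_format, of "(s, a)"] by simp
  qed
  then show ?thesis using m(1) by blast
qed

lemma trans_star_nonneg: "trans_star s j \<ge> 0"
  unfolding trans_star_def using pol_star_pos P_nonneg by (intro sum_nonneg) (simp add: less_imp_le)

lemma sum_trans_star: "(\<Sum>j\<in>UNIV. trans_star s j) = 1"
proof -
  have "(\<Sum>j\<in>UNIV. trans_star s j) = (\<Sum>a\<in>UNIV. pol_star s a * (\<Sum>j\<in>UNIV. P a s j))"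
    unfolding trans_star_def by (simp add: sum_distrib_left) (rule sum.swap)
  then show ?thesis using P_stoch sum_pol_star by simp
qed

definition K_sq_sum :: real where
  "K_sq_sum = (\<Sum>j\<in>UNIV. \<Sum>s\<in>UNIV. \<Sum>a\<in>UNIV. (K a s j)\<^sup>2)"

lemma K_sq_sum_nonneg: "K_sq_sum \<ge> 0"
  unfolding K_sq_sum_def by (simp add: sum_nonneg)

lemma sum_KT_sq_le:
  "(\<Sum>j\<in>UNIV. (\<Sum>s\<in>UNIV. \<Sum>a\<in>UNIV. K a s j * y s a)\<^sup>2) \<le> K_sq_sum * (\<Sum>s\<in>UNIV. \<Sum>a\<in>UNIV. (y s a)\<^sup>2)"
proof -
  have "(\<Sum>j\<in>UNIV. (\<Sum>s\<in>UNIV. \<Sum>a\<in>UNIV. K a s j * y s a)\<^sup>2)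
      \<le> (\<Sum>j\<in>UNIV. (\<Sum>s\<in>UNIV. \<Sum>a\<in>UNIV. (K a s j)\<^sup>2) * (\<Sum>s\<in>UNIV. \<Sum>a\<in>UNIV. (y s a)\<^sup>2))"
    by (intro sum_mono Cauchy_Schwarz_ineq_sum_sum)
  then show ?thesis unfolding K_sq_sum_def by (simp add: sum_distrib_right)
qed

lemma KT_udev_sq_le: "KT_udev_sq t \<le> K_sq_sum * udev_sq t"
  unfolding KT_udev_sq_def KT_udev_def udev_sq_def by (rule sum_KT_sq_le)

lemma sum_K_vdev_sq_le: "(\<Sum>s\<in>UNIV. \<Sum>a\<in>UNIV. (K_vdev t s a)\<^sup>2) \<le> K_sq_sum * vdev_sq t"
proof -
  have "(K_vdev t s a)\<^sup>2 \<le> (\<Sum>j\<in>UNIV. (K a s j)\<^sup>2) * vdev_sq t" for s a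
    unfolding K_vdev_def vdev_sq_def by (rule Cauchy_Schwarz_ineq_sum)
  then have "(\<Sum>s\<in>UNIV. \<Sum>a\<in>UNIV. (K_vdev t s a)\<^sup>2)
      \<le> (\<Sum>s\<in>UNIV. \<Sum>a\<in>UNIV. \<Sum>j\<in>UNIV. (K a s j)\<^sup>2) * vdev_sq t"
    by (simp add: sum_mono sum_distrib_right)
  also have "(\<Sum>s\<in>UNIV. \<Sum>a\<in>UNIV. \<Sum>j\<in>UNIV. (K a s j)\<^sup>2) = (\<Sum>s\<in>UNIV. \<Sum>j\<in>UNIV. \<Sum>a\<in>UNIV. (K a s j)\<^sup>2)"
    by (rule sum.cong[OF refl], rule sum.swap)
  also have "\<dots> = K_sq_sum"
    unfolding K_sq_sum_def by (rule sum.swap)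
  finally show ?thesis .
qed

lemma abs_cross_le: "\<bar>cross t\<bar> \<le> (vdev_sq t + KT_udev_sq t) / 2"
  using sum_mult_le_weighted_sum_squares[of 1 "vdev t" "KT_udev t" UNIV]
    sum_mult_le_weighted_sum_squares[of 1 "\<lambda>j. - vdev t j" "KT_udev t" UNIV]
  unfolding cross_def vdev_sq_def KT_udev_sq_def by (simp add: sum_negf)

lemma cross_le: "cross t \<le> \<alpha> / 2 * vdev_sq t + KT_udev_sq t / (2 * \<alpha>)"
  unfolding cross_def vdev_sq_def KT_udev_sq_def by (rule sum_mult_le_weighted_sum_squares[OF alpha_pos])

lemma neg_sum_vdev_KT_u_rate_le:
  "- (\<Sum>j\<in>UNIV. vdev t j * KT_u_rate t j) \<le> (vdev_sq t + (\<Sum>j\<in>UNIV. (KT_u_rate t j)\<^sup>2)) / 2"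
  using sum_mult_le_weighted_sum_squares[of 1 "\<lambda>j. - vdev t j" "KT_u_rate t" UNIV]
  unfolding vdev_sq_def by (simp add: sum_negf)

definition mass_dev :: "real \<Rightarrow> 'S \<Rightarrow> real" where
  "mass_dev t s = utilde (u t) s - utilde us s"

lemma udev_eq_mass_dev_pol:
  "t \<ge> 0 \<Longrightarrow> udev t s a = mass_dev t s * pol_star s a + utilde (u t) s * (pol t s a - pol_star s a)"
  unfolding udev_def mass_dev_def
  by (simp add: algebra_simps flip: utilde_mult_pol utilde_mult_pol_star)

lemma KT_udev_eq:
  assumes "t \<ge> 0"
  shows "KT_udev t j = (mass_dev t j - \<gamma> * (\<Sum>s\<in>UNIV. mass_dev t s * trans_star s j))
    + (\<Sum>s\<in>UNIV. \<Sum>a\<in>UNIV. K a s j * (utilde (u t) s * (pol t s a - pol_star s a)))"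
  unfolding KT_udev_def udev_eq_mass_dev_pol[OF assms] sum_K_mult_pol_star[symmetric]
  by (simp add: distrib_left sum.distrib)

lemma sum_mass_dev_sq_le:
  "(\<Sum>s\<in>UNIV. (mass_dev t s)\<^sup>2)
    \<le> CARD('S) / (1 - \<gamma>)\<^sup>2 * (\<Sum>j\<in>UNIV. (mass_dev t j - \<gamma> * (\<Sum>s\<in>UNIV. mass_dev t s * trans_star s j))\<^sup>2)"
  using trans_star_nonneg sum_trans_star gamma_pos gamma_lt_1
  by (intro sum_squares_le_sub_stochastic) auto

definition lyap_pert :: "real \<Rightarrow> real \<Rightarrow> real" where
  "lyap_pert \<epsilon> t = lyap t - \<epsilon> * cross t"

definition lyap_pert_rate :: "real \<Rightarrow> real \<Rightarrow> real" where
  "lyap_pert_rate \<epsilon> t = - \<alpha> * vdev_sq t - \<tau> * pol_gap t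
    - \<epsilon> * (KT_udev_sq t / \<alpha> - cross t + (\<Sum>j\<in>UNIV. vdev t j * KT_u_rate t j))"

lemma lyap_pert_deriv:
  assumes "t \<ge> 0"
  shows "(lyap_pert \<epsilon> has_real_derivative lyap_pert_rate \<epsilon> t) (at t within {0..})"
  unfolding lyap_pert_def[abs_def] lyap_pert_rate_def
  by (intro DERIV_diff DERIV_cmult lyap_deriv[OF assms] cross_deriv[OF assms])

end

section \<open>Exponential decay\<close>

locale bounded_saddle_flow = saddle_flow P r \<gamma> \<tau> \<alpha> vs us v u
  for P :: "'A::finite \<Rightarrow> 'S::finite \<Rightarrow> 'S \<Rightarrow> real" and r \<gamma> \<tau> \<alpha> vs us v u +
  fixes m M :: real
  assumes m_pos: "m > 0"
    and us_bounds: "\<forall>s a. m \<le> us s a \<and> us s a \<le> M"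
    and u_bounds: "\<forall>t\<ge>0. \<forall>s a. m \<le> u t s a \<and> u t s a \<le> M"
begin

lemma M_pos: "M > 0"
  using us_bounds m_pos by (meson less_le_trans)

lemma utilde_u_le:
  assumes "t \<ge> 0"
  shows "utilde (u t) s \<le> CARD('A) * M"
proof -
  have "utilde (u t) s \<le> (\<Sum>a\<in>(UNIV :: 'A set). M)"
    unfolding utilde_def using u_bounds assms by (intro sum_mono) auto
  then show ?thesis by simp
qed

lemma utilde_us_le: "utilde us s \<le> CARD('A) * M"
proof -
  have "utilde us s \<le> (\<Sum>a\<in>(UNIV :: 'A set). M)"
    unfolding utilde_def using us_bounds by (intro sum_mono) auto
  then show ?thesis by simp
qed

lemma m_le_utilde_us: "m \<le> utilde us s"
proof -
  have "us s a \<le> utilde us s" for a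
    unfolding utilde_def using us_pos by (intro member_le_sum) (auto intro: less_imp_le)
  then show ?thesis using us_bounds by (meson order_trans)
qed

lemma pol_gap_ge:
  assumes "t \<ge> 0"
  shows "m / 4 * pol_dist_sq t \<le> pol_gap t"
proof -
  have "m / 4 * pol_dist_sq t = (\<Sum>s\<in>UNIV. m * (\<Sum>a\<in>UNIV. (pol t s a - pol_star s a)\<^sup>2) / 4)"
    unfolding pol_dist_sq_def by (simp add: sum_distrib_left sum_divide_distrib)
  also have "\<dots> \<le> (\<Sum>s\<in>UNIV. utilde us s * (\<Sum>a\<in>UNIV. (pol t s a - pol_star s a)\<^sup>2) / 4)"
    using m_le_utilde_us by (intro sum_mono divide_right_mono mult_right_mono) (auto simp: sum_nonneg)
  also have "\<dots> \<le> pol_gap t" unfolding pol_gap_def by (intro sum_mono pol_gap_row_ge[OF assms])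
  finally show ?thesis .
qed

lemma pol_ge: "t \<ge> 0 \<Longrightarrow> m / (CARD('A) * M) \<le> pol t s a"
  unfolding pol_def using u_bounds u_pos utilde_u_le[of t s] utilde_u_pos[of t s] m_pos
  by (intro frac_le) (auto intro: less_imp_le)

lemma pol_star_ge: "m / (CARD('A) * M) \<le> pol_star s a"
  unfolding pol_star_def using us_bounds us_pos utilde_us_le[of s] utilde_us_pos[of s] m_pos
  by (intro frac_le) (auto intro: less_imp_le)

lemma kl_dev_le:
  assumes "t \<ge> 0"
  shows "kl_dev t \<le> udev_sq t / m"
proof -
  have "gen_kl (u t s a) (us s a) \<le> (udev t s a)\<^sup>2 / m" for s a
  proof -
    have "gen_kl (u t s a) (us s a) \<le> (u t s a - us s a)\<^sup>2 / u t s a"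
      using gen_kl_le u_pos us_pos assms by blast
    also have "\<dots> \<le> (u t s a - us s a)\<^sup>2 / m"
      using u_bounds u_pos m_pos assms by (intro divide_left_mono) auto
    finally show ?thesis by (simp add: udev_def)
  qed
  then have "kl_dev t \<le> (\<Sum>s\<in>UNIV. \<Sum>a\<in>UNIV. (udev t s a)\<^sup>2 / m)"
    unfolding kl_dev_def by (intro sum_mono)
  then show ?thesis unfolding udev_sq_def by (simp add: sum_divide_distrib)
qed

lemma udev_sq_le_kl_dev:
  assumes "t \<ge> 0"
  shows "udev_sq t \<le> 4 * M * kl_dev t"
proof -
  have "(udev t s a)\<^sup>2 \<le> 4 * M * gen_kl (u t s a) (us s a)" for s a
    unfolding udev_def using u_pos us_pos u_bounds us_bounds assms by (intro square_diff_le_gen_kl) auto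
  then have "udev_sq t \<le> (\<Sum>s\<in>UNIV. \<Sum>a\<in>UNIV. 4 * M * gen_kl (u t s a) (us s a))"
    unfolding udev_sq_def by (intro sum_mono)
  then show ?thesis unfolding kl_dev_def by (simp add: sum_distrib_left)
qed

lemma ln_pol_diff_squared_le:
  assumes "t \<ge> 0"
  shows "(ln (pol_star s a) - ln (pol t s a))\<^sup>2 \<le> (CARD('A) * M / m)\<^sup>2 * (pol t s a - pol_star s a)\<^sup>2"
proof -
  have "\<bar>ln (pol_star s a) - ln (pol t s a)\<bar> \<le> \<bar>pol_star s a - pol t s a\<bar> / (m / (CARD('A) * M))"
    using m_pos M_pos by (intro abs_ln_diff_le pol_star_ge pol_ge[OF assms]) (auto intro!: divide_pos_pos)
  then have "\<bar>ln (pol_star s a) - ln (pol t s a)\<bar>\<^sup>2 \<le> (\<bar>pol_star s a - pol t s a\<bar> / (m / (CARD('A) * M)))\<^sup>2"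
    by (intro power_mono) auto
  then show ?thesis by (simp add: power_divide power2_commute field_simps)
qed

lemma sum_u_rate_sq_le:
  assumes "t \<ge> 0"
  shows "(\<Sum>s\<in>UNIV. \<Sum>a\<in>UNIV. (u_rate t s a)\<^sup>2)
    \<le> 2 * M\<^sup>2 * ((CARD('A) * M / m)\<^sup>2 * pol_dist_sq t + K_sq_sum / \<tau>\<^sup>2 * vdev_sq t)"
proof -
  define L where "L = (CARD('A) * M / m)\<^sup>2"
  have "(u_rate t s a)\<^sup>2 \<le> 2 * M\<^sup>2 * (L * (pol t s a - pol_star s a)\<^sup>2 + (K_vdev t s a)\<^sup>2 / \<tau>\<^sup>2)" for s a
  proof -
    have "(u t s a)\<^sup>2 \<le> M\<^sup>2" using u_bounds u_pos assms by (intro power_mono) (auto intro: less_imp_le)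
    then have "(u t s a)\<^sup>2 * (ln (pol_star s a) - ln (pol t s a) - K_vdev t s a / \<tau>)\<^sup>2
        \<le> M\<^sup>2 * (2 * (L * (pol t s a - pol_star s a)\<^sup>2) + 2 * (K_vdev t s a / \<tau>)\<^sup>2)"
      using square_diff_le[of "ln (pol_star s a) - ln (pol t s a)" "K_vdev t s a / \<tau>"]
        ln_pol_diff_squared_le[OF assms, of s a]
      unfolding L_def by (intro mult_mono) auto
    moreover have "(u_rate t s a)\<^sup>2
        = (u t s a)\<^sup>2 * (ln (pol_star s a) - ln (pol t s a) - K_vdev t s a / \<tau>)\<^sup>2"
      unfolding u_rate_def by (simp only: power_mult_distrib)
    ultimately show ?thesis by (simp add: power_divide algebra_simps)
  qed
  then have "(\<Sum>s\<in>UNIV. \<Sum>a\<in>UNIV. (u_rate t s a)\<^sup>2) \<le> (\<Sum>s\<in>UNIV. \<Sum>a\<in>UNIV.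
      2 * M\<^sup>2 * (L * (pol t s a - pol_star s a)\<^sup>2 + (K_vdev t s a)\<^sup>2 / \<tau>\<^sup>2))"
    by (intro sum_mono)
  also have "\<dots> = 2 * M\<^sup>2 * (L * pol_dist_sq t + (\<Sum>s\<in>UNIV. \<Sum>a\<in>UNIV. (K_vdev t s a)\<^sup>2) / \<tau>\<^sup>2)"
    unfolding pol_dist_sq_def by (simp add: sum.distrib sum_distrib_left sum_divide_distrib distrib_left)
  also have "\<dots> \<le> 2 * M\<^sup>2 * (L * pol_dist_sq t + K_sq_sum / \<tau>\<^sup>2 * vdev_sq t)"
    using sum_K_vdev_sq_le[of t] by (intro mult_left_mono add_left_mono) (auto simp: divide_right_mono)
  finally show ?thesis unfolding L_def .
qed

lemma sum_KT_u_rate_sq_bound: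
  obtains C where "C \<ge> 0"
    and "\<And>t. t \<ge> 0 \<Longrightarrow> (\<Sum>j\<in>UNIV. (KT_u_rate t j)\<^sup>2) \<le> C * (vdev_sq t + pol_dist_sq t)"
proof
  define C where "C = K_sq_sum * 2 * M\<^sup>2 * ((CARD('A) * M / m)\<^sup>2 + K_sq_sum / \<tau>\<^sup>2)"
  show "C \<ge> 0" unfolding C_def using K_sq_sum_nonneg by simp
  fix t :: real assume "t \<ge> 0"
  have "(\<Sum>j\<in>UNIV. (KT_u_rate t j)\<^sup>2) \<le> K_sq_sum * (\<Sum>s\<in>UNIV. \<Sum>a\<in>UNIV. (u_rate t s a)\<^sup>2)"
    unfolding KT_u_rate_def by (rule sum_KT_sq_le)
  also have "\<dots> \<le> K_sq_sum * (2 * M\<^sup>2 * ((CARD('A) * M / m)\<^sup>2 * pol_dist_sq t + K_sq_sum / \<tau>\<^sup>2 * vdev_sq t))"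
    by (intro mult_left_mono sum_u_rate_sq_le[OF \<open>t \<ge> 0\<close>] K_sq_sum_nonneg)
  also have "\<dots> \<le> C * (vdev_sq t + pol_dist_sq t)"
  proof -
    have "(CARD('A) * M / m)\<^sup>2 * pol_dist_sq t + K_sq_sum / \<tau>\<^sup>2 * vdev_sq t
        \<le> ((CARD('A) * M / m)\<^sup>2 + K_sq_sum / \<tau>\<^sup>2) * (vdev_sq t + pol_dist_sq t)"
    proof -
      have "0 \<le> (CARD('A) * M / m)\<^sup>2 * vdev_sq t" "0 \<le> K_sq_sum / \<tau>\<^sup>2 * pol_dist_sq t"
        using K_sq_sum_nonneg vdev_sq_nonneg[of t] pol_dist_sq_nonneg[of t] by simp_all
      then show ?thesis by (simp add: algebra_simps add_divide_distrib)
    qed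
    from mult_left_mono[OF this, of "K_sq_sum * 2 * M\<^sup>2"] show ?thesis
      unfolding C_def using K_sq_sum_nonneg by (simp add: mult.assoc)
  qed
  finally show "(\<Sum>j\<in>UNIV. (KT_u_rate t j)\<^sup>2) \<le> C * (vdev_sq t + pol_dist_sq t)" .
qed

lemma pol_star_le_1: "pol_star s a \<le> 1"
  using member_le_sum[of a UNIV "pol_star s"] sum_pol_star[of s] pol_star_pos[of s] by (simp add: less_imp_le)

lemma udev_sq_le_mass_dev:
  assumes "t \<ge> 0"
  shows "udev_sq t \<le> 2 * (\<Sum>s\<in>UNIV. (mass_dev t s)\<^sup>2) + 2 * (CARD('A) * M)\<^sup>2 * pol_dist_sq t"
proof -
  have "(udev t s a)\<^sup>2 \<le> 2 * ((mass_dev t s)\<^sup>2 * pol_star s a) + 2 * ((CARD('A) * M)\<^sup>2 * (pol t s a - pol_star s a)\<^sup>2)"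
    for s a
  proof -
    have "(pol_star s a)\<^sup>2 \<le> pol_star s a"
      using pol_star_le_1[of s a] pol_star_pos[of s a] by (simp add: power2_eq_square mult_le_cancel_right1)
    then have "(mass_dev t s * pol_star s a)\<^sup>2 \<le> (mass_dev t s)\<^sup>2 * pol_star s a"
      by (simp add: power_mult_distrib mult_left_mono)
    moreover have "(utilde (u t) s)\<^sup>2 \<le> (CARD('A) * M)\<^sup>2"
      using utilde_u_le[OF assms] utilde_u_pos[OF assms] by (intro power_mono) (auto intro: less_imp_le)
    then have "(utilde (u t) s * (pol t s a - pol_star s a))\<^sup>2 \<le> (CARD('A) * M)\<^sup>2 * (pol t s a - pol_star s a)\<^sup>2"
      by (simp add: power_mult_distrib mult_right_mono)
    ultimately show ?thesis
      unfolding udev_eq_mass_dev_pol[OF assms]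
      using square_add_le[of "mass_dev t s * pol_star s a" "utilde (u t) s * (pol t s a - pol_star s a)"]
      by linarith
  qed
  then have "udev_sq t \<le> (\<Sum>s\<in>UNIV. \<Sum>a\<in>UNIV.
      2 * ((mass_dev t s)\<^sup>2 * pol_star s a) + 2 * ((CARD('A) * M)\<^sup>2 * (pol t s a - pol_star s a)\<^sup>2))"
    unfolding udev_sq_def by (intro sum_mono)
  also have "\<dots> = 2 * (\<Sum>s\<in>UNIV. (mass_dev t s)\<^sup>2 * (\<Sum>a\<in>UNIV. pol_star s a)) + 2 * (CARD('A) * M)\<^sup>2 * pol_dist_sq t"
    unfolding pol_dist_sq_def by (simp add: sum.distrib sum_distrib_left mult.assoc)
  finally show ?thesis by (simp add: sum_pol_star)
qed

lemma sum_KT_pol_dev_sq_le: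
  assumes "t \<ge> 0"
  shows "(\<Sum>j\<in>UNIV. (\<Sum>s\<in>UNIV. \<Sum>a\<in>UNIV. K a s j * (utilde (u t) s * (pol t s a - pol_star s a)))\<^sup>2)
    \<le> K_sq_sum * ((CARD('A) * M)\<^sup>2 * pol_dist_sq t)"
proof -
  have "(utilde (u t) s)\<^sup>2 \<le> (CARD('A) * M)\<^sup>2" for s
    using utilde_u_le[OF assms] utilde_u_pos[OF assms] by (intro power_mono) (auto intro: less_imp_le)
  then have "(utilde (u t) s * (pol t s a - pol_star s a))\<^sup>2 \<le> (CARD('A) * M)\<^sup>2 * (pol t s a - pol_star s a)\<^sup>2"
    for s a
    unfolding power_mult_distrib[of "utilde (u t) s"] by (rule mult_right_mono) simp
  then have "(\<Sum>s\<in>UNIV. \<Sum>a\<in>UNIV. (utilde (u t) s * (pol t s a - pol_star s a))\<^sup>2)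
      \<le> (\<Sum>s\<in>UNIV. \<Sum>a\<in>UNIV. (CARD('A) * M)\<^sup>2 * (pol t s a - pol_star s a)\<^sup>2)"
    by (intro sum_mono)
  then have "(\<Sum>s\<in>UNIV. \<Sum>a\<in>UNIV. (utilde (u t) s * (pol t s a - pol_star s a))\<^sup>2)
      \<le> (CARD('A) * M)\<^sup>2 * pol_dist_sq t"
    unfolding pol_dist_sq_def by (simp add: sum_distrib_left)
  with sum_KT_sq_le show ?thesis by (meson K_sq_sum_nonneg mult_left_mono order_trans)
qed

text \<open>Invertibility of \<open>K\<close> enters here: the total masses \<open>utilde (u t)\<close> are controlled
  by \<open>KT_udev\<close> through the \<open>\<ell>\<^sup>1\<close> contraction estimate for \<open>trans_star\<close>.\<close>
lemma udev_sq_bound: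
  obtains C where "C > 0" and "\<And>t. t \<ge> 0 \<Longrightarrow> udev_sq t \<le> C * (KT_udev_sq t + pol_dist_sq t)"
proof
  define Q where "Q = (CARD('A) * M)\<^sup>2"
  define N where "N = CARD('S) / (1 - \<gamma>)\<^sup>2"
  have Q_pos: "Q > 0" unfolding Q_def using M_pos by simp
  have N_nonneg: "N \<ge> 0" unfolding N_def by simp
  show "4 * N * (1 + K_sq_sum * Q) + 2 * Q > 0"
    using Q_pos N_nonneg K_sq_sum_nonneg by (simp add: add_nonneg_pos)
  fix t :: real assume "t \<ge> 0"
  define z where "z j = mass_dev t j - \<gamma> * (\<Sum>s\<in>UNIV. mass_dev t s * trans_star s j)" for j
  define e where "e j = (\<Sum>s\<in>UNIV. \<Sum>a\<in>UNIV. K a s j * (utilde (u t) s * (pol t s a - pol_star s a)))" for j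
  have "(z j)\<^sup>2 \<le> 2 * (KT_udev t j)\<^sup>2 + 2 * (e j)\<^sup>2" for j
    using square_diff_le[of "KT_udev t j" "e j"] KT_udev_eq[OF \<open>t \<ge> 0\<close>, of j] by (simp add: z_def e_def)
  then have "(\<Sum>j\<in>UNIV. (z j)\<^sup>2) \<le> (\<Sum>j\<in>UNIV. 2 * (KT_udev t j)\<^sup>2 + 2 * (e j)\<^sup>2)"
    by (rule sum_mono)
  also have "\<dots> = 2 * KT_udev_sq t + 2 * (\<Sum>j\<in>UNIV. (e j)\<^sup>2)"
    unfolding KT_udev_sq_def by (simp add: sum.distrib sum_distrib_left)
  also have "\<dots> \<le> 2 * KT_udev_sq t + 2 * (K_sq_sum * (Q * pol_dist_sq t))"
    using sum_KT_pol_dev_sq_le[OF \<open>t \<ge> 0\<close>] unfolding e_def Q_def by simp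
  finally have "(\<Sum>s\<in>UNIV. (mass_dev t s)\<^sup>2) \<le> N * (2 * KT_udev_sq t + 2 * (K_sq_sum * (Q * pol_dist_sq t)))"
    using sum_mass_dev_sq_le[of t] N_nonneg unfolding z_def N_def
    by (meson mult_left_mono order_trans)
  then have "udev_sq t \<le> 2 * (N * (2 * KT_udev_sq t + 2 * (K_sq_sum * (Q * pol_dist_sq t)))) + 2 * Q * pol_dist_sq t"
    using udev_sq_le_mass_dev[OF \<open>t \<ge> 0\<close>] unfolding Q_def by linarith
  also have "\<dots> \<le> (4 * N * (1 + K_sq_sum * Q) + 2 * Q) * (KT_udev_sq t + pol_dist_sq t)"
  proof -
    have "0 \<le> N * KT_udev_sq t * K_sq_sum * Q" "0 \<le> N * pol_dist_sq t" "0 \<le> Q * KT_udev_sq t"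
      using N_nonneg Q_pos K_sq_sum_nonneg KT_udev_sq_nonneg[of t] pol_dist_sq_nonneg[of t] by simp_all
    then show ?thesis by (simp add: algebra_simps)
  qed
  finally show "udev_sq t \<le> (4 * N * (1 + K_sq_sum * Q) + 2 * Q) * (KT_udev_sq t + pol_dist_sq t)" .
qed

lemma lyap_pert_le:
  assumes "0 \<le> \<epsilon>" "\<epsilon> \<le> 1" "t \<ge> 0"
  shows "lyap_pert \<epsilon> t \<le> (\<alpha> / 2 + 1 / 2 + \<tau> / m + K_sq_sum / 2) * (vdev_sq t + udev_sq t)"
proof -
  have "- (\<epsilon> * cross t) \<le> (vdev_sq t + KT_udev_sq t) / 2"
  proof -
    have "- (\<epsilon> * cross t) \<le> \<epsilon> * \<bar>cross t\<bar>" using assms by (simp add: abs_if)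
    also have "\<dots> \<le> 1 * ((vdev_sq t + KT_udev_sq t) / 2)"
      using assms abs_cross_le[of t] by (intro mult_mono) auto
    finally show ?thesis by simp
  qed
  moreover have "\<tau> * kl_dev t \<le> \<tau> / m * udev_sq t"
    using mult_left_mono[OF kl_dev_le[OF assms(3)], of \<tau>] tau_pos by simp
  moreover have "KT_udev_sq t \<le> K_sq_sum * udev_sq t" by (rule KT_udev_sq_le)
  moreover have "0 \<le> (\<alpha> / 2 + 1 / 2) * udev_sq t" "0 \<le> (\<tau> / m + K_sq_sum / 2) * vdev_sq t"
    using alpha_pos tau_pos m_pos K_sq_sum_nonneg udev_sq_nonneg[of t] vdev_sq_nonneg[of t] by simp_all
  ultimately show ?thesis unfolding lyap_pert_def lyap_def by (simp add: algebra_simps)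
qed

lemma lyap_pert_ge:
  assumes "0 \<le> \<epsilon>" "\<epsilon> \<le> \<alpha> / 2" "\<epsilon> * K_sq_sum \<le> \<tau> / (4 * M)" "t \<ge> 0"
  shows "min (\<alpha> / 4) (\<tau> / (8 * M)) * (vdev_sq t + udev_sq t) \<le> lyap_pert \<epsilon> t"
proof -
  have "\<tau> / (4 * M) * udev_sq t \<le> \<tau> * kl_dev t"
    using udev_sq_le_kl_dev[OF assms(4)] tau_pos M_pos by (simp add: field_simps)
  moreover have "\<epsilon> * cross t \<le> \<epsilon> * ((vdev_sq t + K_sq_sum * udev_sq t) / 2)"
    using abs_cross_le[of t] KT_udev_sq_le[of t] assms(1) by (intro mult_left_mono) auto
  moreover have "\<epsilon> * vdev_sq t \<le> \<alpha> / 2 * vdev_sq t"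
    using assms(2) vdev_sq_nonneg by (intro mult_right_mono) auto
  moreover have "\<epsilon> * K_sq_sum * udev_sq t \<le> \<tau> / (4 * M) * udev_sq t"
    using assms(3) udev_sq_nonneg by (intro mult_right_mono) auto
  moreover have "min (\<alpha> / 4) (\<tau> / (8 * M)) * vdev_sq t \<le> \<alpha> / 4 * vdev_sq t"
    "min (\<alpha> / 4) (\<tau> / (8 * M)) * udev_sq t \<le> \<tau> / (8 * M) * udev_sq t"
    using vdev_sq_nonneg udev_sq_nonneg by (intro mult_right_mono; simp)+
  ultimately show ?thesis unfolding lyap_pert_def lyap_def by (simp add: field_simps)
qed

lemma lyap_pert_rate_le:
  assumes C: "\<And>t. t \<ge> 0 \<Longrightarrow> (\<Sum>j\<in>UNIV. (KT_u_rate t j)\<^sup>2) \<le> C * (vdev_sq t + pol_dist_sq t)"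
    and "0 \<le> \<epsilon>" "\<epsilon> \<le> 1" "\<epsilon> * (1 + C) \<le> \<alpha> / 2" "\<epsilon> * C \<le> \<tau> * m / 4" "t \<ge> 0"
  shows "lyap_pert_rate \<epsilon> t \<le> - (\<alpha> / 4 * vdev_sq t + \<tau> * m / 8 * pol_dist_sq t + \<epsilon> / (2 * \<alpha>) * KT_udev_sq t)"
proof -
  define X where "X = vdev_sq t"
  define Pd where "Pd = pol_dist_sq t"
  define G where "G = KT_udev_sq t"
  define S where "S = (\<Sum>j\<in>UNIV. vdev t j * KT_u_rate t j)"
  have X: "X \<ge> 0" and Pd: "Pd \<ge> 0" unfolding X_def Pd_def by (simp_all add: vdev_sq_nonneg pol_dist_sq_nonneg)
  have "\<tau> * m / 4 * Pd \<le> \<tau> * pol_gap t"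
    using mult_left_mono[OF pol_gap_ge[OF assms(6)], of \<tau>] tau_pos unfolding Pd_def by simp
  moreover have "\<epsilon> * cross t \<le> \<epsilon> * \<alpha> / 2 * X + \<epsilon> / (2 * \<alpha>) * G"
    using mult_left_mono[OF cross_le assms(2)] unfolding X_def G_def by (simp add: algebra_simps)
  moreover have "- (\<epsilon> * S) \<le> \<epsilon> / 2 * X + \<epsilon> * C / 2 * X + \<epsilon> * C / 2 * Pd"
    using mult_left_mono[OF order_trans[OF neg_sum_vdev_KT_u_rate_le[of t]
        divide_right_mono[OF add_left_mono[OF C[OF assms(6)]]]] assms(2)]
    unfolding X_def Pd_def S_def by (simp add: algebra_simps)
  moreover have "\<epsilon> * \<alpha> / 2 * X \<le> \<alpha> / 2 * X"
    using assms(3) alpha_pos X by (intro mult_right_mono) auto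
  moreover have "\<epsilon> / 2 * X + \<epsilon> * C / 2 * X \<le> \<alpha> / 4 * X"
    using mult_right_mono[OF assms(4) X] by (simp add: algebra_simps)
  moreover have "\<epsilon> * C / 2 * Pd \<le> \<tau> * m / 8 * Pd"
    using mult_right_mono[OF assms(5) Pd] by (simp add: algebra_simps)
  moreover have "\<epsilon> * (G / \<alpha>) = 2 * (\<epsilon> / (2 * \<alpha>) * G)" by simp
  ultimately show ?thesis
    unfolding lyap_pert_rate_def X_def[symmetric] Pd_def[symmetric] G_def[symmetric] S_def[symmetric]
    by (simp only: right_diff_distrib distrib_left)
qed

lemma ex_small_eps:
  assumes "C \<ge> 0"
  obtains \<epsilon> where "0 < \<epsilon>" "\<epsilon> \<le> 1" "\<epsilon> \<le> \<alpha> / 2" "\<epsilon> * (1 + C) \<le> \<alpha> / 2" "\<epsilon> * C \<le> \<tau> * m / 4"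
    "\<epsilon> * K_sq_sum \<le> \<tau> / (4 * M)"
proof -
  define \<epsilon> where "\<epsilon> = Min {1, \<alpha> / 2, \<alpha> / (2 * (1 + C)), \<tau> * m / (4 * (1 + C)), \<tau> / (4 * M * (1 + K_sq_sum))}"
  have \<epsilon>_pos: "\<epsilon> > 0"
    unfolding \<epsilon>_def using alpha_pos tau_pos m_pos M_pos assms K_sq_sum_nonneg by simp
  have \<epsilon>_le: "\<epsilon> \<le> x" if "x \<in> {1, \<alpha> / 2, \<alpha> / (2 * (1 + C)), \<tau> * m / (4 * (1 + C)),
      \<tau> / (4 * M * (1 + K_sq_sum))}" for x
    unfolding \<epsilon>_def using that by (intro Min_le) auto
  have "\<epsilon> \<le> \<alpha> / (2 * (1 + C))" "\<epsilon> \<le> \<tau> * m / (4 * (1 + C))" "\<epsilon> \<le> \<tau> / (4 * M * (1 + K_sq_sum))"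
    by (rule \<epsilon>_le, simp)+
  then have "\<epsilon> * (1 + C) \<le> \<alpha> / 2" "\<epsilon> * (1 + C) \<le> \<tau> * m / 4" "\<epsilon> * (1 + K_sq_sum) \<le> \<tau> / (4 * M)"
    using assms K_sq_sum_nonneg M_pos by (simp_all add: le_divide_eq mult.commute mult.left_commute)
  moreover have "\<epsilon> \<le> 1" "\<epsilon> \<le> \<alpha> / 2" by (rule \<epsilon>_le, simp)+
  ultimately show ?thesis using \<epsilon>_pos by (intro that[of \<epsilon>]) (simp_all add: algebra_simps)
qed

lemma lyap_pert_rate_le_neg_dev_sq:
  assumes C: "C > 0" "\<And>t. t \<ge> 0 \<Longrightarrow> udev_sq t \<le> C * (KT_udev_sq t + pol_dist_sq t)"
    and rate: "\<And>t. t \<ge> 0 \<Longrightarrow>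
      lyap_pert_rate \<epsilon> t \<le> - (\<alpha> / 4 * vdev_sq t + \<tau> * m / 8 * pol_dist_sq t + \<epsilon> / (2 * \<alpha>) * KT_udev_sq t)"
    and "\<epsilon> > 0"
  obtains \<kappa> where "\<kappa> > 0" "\<And>t. t \<ge> 0 \<Longrightarrow> lyap_pert_rate \<epsilon> t \<le> - \<kappa> * (vdev_sq t + udev_sq t)"
proof
  define \<kappa>0 where "\<kappa>0 = Min {\<alpha> / 4, \<tau> * m / 8, \<epsilon> / (2 * \<alpha>)}"
  have \<kappa>0_pos: "\<kappa>0 > 0" unfolding \<kappa>0_def using alpha_pos tau_pos m_pos \<open>\<epsilon> > 0\<close> by simp
  have \<kappa>0_le: "\<kappa>0 \<le> \<alpha> / 4" "\<kappa>0 \<le> \<tau> * m / 8" "\<kappa>0 \<le> \<epsilon> / (2 * \<alpha>)"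
    unfolding \<kappa>0_def by (rule Min_le, simp, simp)+
  show "\<kappa>0 / (1 + C) > 0" using \<kappa>0_pos C(1) by simp
  fix t :: real assume "t \<ge> 0"
  define X where "X = vdev_sq t"
  define Pd where "Pd = pol_dist_sq t"
  define G where "G = KT_udev_sq t"
  have nonneg: "X \<ge> 0" "Pd \<ge> 0" "G \<ge> 0" unfolding X_def Pd_def G_def
    by (simp_all add: vdev_sq_nonneg pol_dist_sq_nonneg KT_udev_sq_nonneg)
  have "udev_sq t \<le> C * (G + Pd)" using C(2)[OF \<open>t \<ge> 0\<close>] unfolding G_def Pd_def .
  moreover have "0 \<le> C * X" using C(1) nonneg(1) by simp
  ultimately have "X + udev_sq t \<le> (1 + C) * (X + Pd + G)" using nonneg by (simp add: algebra_simps)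
  then have "\<kappa>0 / (1 + C) * (X + udev_sq t) \<le> \<kappa>0 / (1 + C) * ((1 + C) * (X + Pd + G))"
    using \<kappa>0_pos C(1) by (intro mult_left_mono) auto
  also have "\<dots> = \<kappa>0 * (X + Pd + G)" using C(1) by simp
  also have "\<dots> \<le> \<alpha> / 4 * X + \<tau> * m / 8 * Pd + \<epsilon> / (2 * \<alpha>) * G"
    using mult_right_mono[OF \<kappa>0_le(1) nonneg(1)] mult_right_mono[OF \<kappa>0_le(2) nonneg(2)]
      mult_right_mono[OF \<kappa>0_le(3) nonneg(3)]
    by (simp add: distrib_left)
  finally show "lyap_pert_rate \<epsilon> t \<le> - (\<kappa>0 / (1 + C)) * (vdev_sq t + udev_sq t)"
    using rate[OF \<open>t \<ge> 0\<close>] unfolding X_def Pd_def G_def by simp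
qed

lemma lyap_pert_dissipative:
  obtains \<epsilon> \<kappa> where "0 \<le> \<epsilon>" "\<epsilon> \<le> 1" "\<epsilon> \<le> \<alpha> / 2" "\<epsilon> * K_sq_sum \<le> \<tau> / (4 * M)" "\<kappa> > 0"
    and "\<And>t. t \<ge> 0 \<Longrightarrow> lyap_pert_rate \<epsilon> t \<le> - \<kappa> * (vdev_sq t + udev_sq t)"
proof -
  obtain C1 where C1: "C1 \<ge> 0"
    "\<And>t. t \<ge> 0 \<Longrightarrow> (\<Sum>j\<in>UNIV. (KT_u_rate t j)\<^sup>2) \<le> C1 * (vdev_sq t + pol_dist_sq t)"
    using sum_KT_u_rate_sq_bound by blast
  obtain \<epsilon> where \<epsilon>: "0 < \<epsilon>" "\<epsilon> \<le> 1" "\<epsilon> \<le> \<alpha> / 2" "\<epsilon> * (1 + C1) \<le> \<alpha> / 2" "\<epsilon> * C1 \<le> \<tau> * m / 4"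
    "\<epsilon> * K_sq_sum \<le> \<tau> / (4 * M)"
    using ex_small_eps[OF C1(1)] by blast
  obtain C2 where "C2 > 0" "\<And>t. t \<ge> 0 \<Longrightarrow> udev_sq t \<le> C2 * (KT_udev_sq t + pol_dist_sq t)"
    using udev_sq_bound by blast
  then obtain \<kappa> where "\<kappa> > 0" "\<And>t. t \<ge> 0 \<Longrightarrow> lyap_pert_rate \<epsilon> t \<le> - \<kappa> * (vdev_sq t + udev_sq t)"
    using lyap_pert_rate_le_neg_dev_sq lyap_pert_rate_le[OF C1(2) less_imp_le[OF \<epsilon>(1)] \<epsilon>(2,4,5)] \<epsilon>(1)
    by blast
  with \<epsilon> show ?thesis by (intro that[of \<epsilon> \<kappa>]) auto
qed

lemma dev_sq_exp_decay:
  obtains C c where "c > 0" and "\<And>t. t \<ge> 0 \<Longrightarrow> vdev_sq t + udev_sq t \<le> C * exp (- c * t)"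
proof -
  obtain \<epsilon> \<kappa> where \<epsilon>: "0 \<le> \<epsilon>" "\<epsilon> \<le> 1" "\<epsilon> \<le> \<alpha> / 2" "\<epsilon> * K_sq_sum \<le> \<tau> / (4 * M)"
    and \<kappa>: "\<kappa> > 0" "\<And>t. t \<ge> 0 \<Longrightarrow> lyap_pert_rate \<epsilon> t \<le> - \<kappa> * (vdev_sq t + udev_sq t)"
    using lyap_pert_dissipative by blast
  define C_up where "C_up = \<alpha> / 2 + 1 / 2 + \<tau> / m + K_sq_sum / 2"
  define c_low where "c_low = min (\<alpha> / 4) (\<tau> / (8 * M))"
  have "\<tau> / m > 0" using tau_pos m_pos by simp
  then have C_up: "C_up > 0" unfolding C_up_def using alpha_pos K_sq_sum_nonneg by linarith
  have c_low: "c_low > 0" unfolding c_low_def using alpha_pos tau_pos M_pos by simp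
  have rate: "lyap_pert_rate \<epsilon> t \<le> - (\<kappa> / C_up) * lyap_pert \<epsilon> t" if "t \<ge> 0" for t
  proof -
    have "\<kappa> / C_up * lyap_pert \<epsilon> t \<le> \<kappa> * (vdev_sq t + udev_sq t)"
      using mult_left_mono[OF lyap_pert_le[OF \<epsilon>(1,2) that], of "\<kappa> / C_up"] \<kappa>(1) C_up
      unfolding C_up_def by simp
    then show ?thesis using \<kappa>(2)[OF that] by simp
  qed
  show ?thesis
  proof
    show "\<kappa> / C_up > 0" using \<kappa>(1) C_up by simp
    fix t :: real assume "t \<ge> 0"
    have "c_low * (vdev_sq t + udev_sq t) \<le> lyap_pert \<epsilon> 0 * exp (- (\<kappa> / C_up) * t)"
      using lyap_pert_ge[OF \<epsilon>(1,3,4) \<open>t \<ge> 0\<close>] exp_decay_of_DERIV_le[OF lyap_pert_deriv rate \<open>t \<ge> 0\<close>]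
      unfolding c_low_def by simp
    then show "vdev_sq t + udev_sq t \<le> lyap_pert \<epsilon> 0 / c_low * exp (- (\<kappa> / C_up) * t)"
      using c_low by (simp add: field_simps)
  qed
qed

end

theorem theorem2p5:
  fixes P :: "'A::finite \<Rightarrow> 'S::finite \<Rightarrow> 'S \<Rightarrow> real"
    and r :: "'S \<Rightarrow> 'A \<Rightarrow> real"
    and \<gamma> \<tau> \<alpha> :: real
    and vs :: "'S \<Rightarrow> real" and us :: "'S \<Rightarrow> 'A \<Rightarrow> real"
    and v :: "real \<Rightarrow> 'S \<Rightarrow> real" and u :: "real \<Rightarrow> 'S \<Rightarrow> 'A \<Rightarrow> real"
  assumes P_nonneg: "\<forall>a s s'. P a s s' \<ge> 0"
    and P_stoch: "\<forall>a s. (\<Sum>s'\<in>UNIV. P a s s') = 1"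
    and r_nonneg: "\<forall>s a. r s a \<ge> 0"
    and gamma: "0 < \<gamma>" "\<gamma> < 1"
    and tau: "\<tau> > 0"
    and alpha: "\<alpha> > 0"
    and saddle: "is_saddle \<alpha> \<tau> \<gamma> P r vs us"
    and u_pos: "\<forall>t\<ge>0. \<forall>s a. u t s a > 0"
    and v_ode: "\<forall>t\<ge>0. \<forall>s'. ((\<lambda>t. v t s') has_real_derivative
          (- (v t s' - (1 / \<alpha>) * (\<Sum>s\<in>UNIV. \<Sum>a\<in>UNIV. Kmat \<gamma> P a s s' * u t s a))))
          (at t within {0..})"
    and u_ode: "\<forall>t\<ge>0. \<forall>s a. ((\<lambda>t. u t s a) has_real_derivative
          (- u t s a * (ln (u t s a / utilde (u t) s)
              - (1 / \<tau>) * (r s a - (\<Sum>s'\<in>UNIV. Kmat \<gamma> P a s s' * v t s')))))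
          (at t within {0..})"
  shows "\<exists>C c. c > 0 \<and> (\<forall>t\<ge>0.
           (\<Sum>s\<in>UNIV. \<bar>v t s - vs s\<bar>) + (\<Sum>s\<in>UNIV. \<Sum>a\<in>UNIV. \<bar>u t s a - us s a\<bar>)
             \<le> C * exp (- c * t))"
proof -
  interpret saddle_flow P r \<gamma> \<tau> \<alpha> vs us v u
    using P_nonneg P_stoch gamma tau alpha saddle u_pos v_ode u_ode by unfold_locales auto
  obtain m M where "m > 0" "\<forall>s a. m \<le> us s a \<and> us s a \<le> M"
    "\<forall>t\<ge>0. \<forall>s a. m \<le> u t s a \<and> u t s a \<le> M"
    using u_bounded by blast
  then interpret bounded_saddle_flow P r \<gamma> \<tau> \<alpha> vs us v u m M
    by unfold_locales
  obtain C c where "c > 0" and decay: "\<And>t. t \<ge> 0 \<Longrightarrow> vdev_sq t + udev_sq t \<le> C * exp (- c * t)"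
    using dev_sq_exp_decay by blast
  define N :: real where "N = 2 * (CARD('S) + CARD('S) * CARD('A))"
  have "(\<Sum>s\<in>UNIV. \<bar>v t s - vs s\<bar>) + (\<Sum>s\<in>UNIV. \<Sum>a\<in>UNIV. \<bar>u t s a - us s a\<bar>)
      \<le> sqrt (N * C) * exp (- (c / 2) * t)" if "t \<ge> 0" for t
  proof (rule le_sqrt_mult_exp_of_square_le)
    have "N * (vdev_sq t + udev_sq t) \<le> N * (C * exp (- c * t))"
      using decay[OF that] by (intro mult_left_mono) (simp_all add: N_def)
    then show "((\<Sum>s\<in>UNIV. \<bar>v t s - vs s\<bar>) + (\<Sum>s\<in>UNIV. \<Sum>a\<in>UNIV. \<bar>u t s a - us s a\<bar>))\<^sup>2
        \<le> N * C * exp (- c * t)"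
      using sum_abs_add_sum_sum_abs_squared_le[of "vdev t" "udev t"]
      unfolding N_def vdev_sq_def udev_sq_def vdev_def udev_def by simp
  qed
  with \<open>c > 0\<close> show ?thesis by (intro exI[of _ "sqrt (N * C)"] exI[of _ "c / 2"]) auto
qed

end
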